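(* Fix an integer $r\ge2$, $\varepsilon>0$, $\gamma=(\gamma_1,\dots,\gamma_r)$ with $\gamma_i\in(0,1)$, $\sum_i\gamma_i=1$, and $i^\star=\arg\max_i\gamma_i$; let $\tilde\varepsilon=\varepsilon\min_i\gamma_i$ and $\Psi=\left(\frac{\gamma_{i^\star}\log d}{d\,r^{r-1}(r-1)\prod_{i=1}^r\gamma_i}\right)^{1/(r-1)}$. Let $K\in\mathbb{N}$ be sufficiently large in terms of $r,\varepsilon,\gamma$, and let $a>0$ be a constant. Consider an interpolation path $A^{(0)},\dots,A^{(T)}$ for $\mathcal{H}(r,n,p)$, $p=d/n^{r-1}$, of length $T\le n^a$. If $d=d(\varepsilon,r,\gamma,K)$ is sufficiently large, then with probability $1-\exp(-\Omega(n))$ there is no sequence of subsets $S_1,\dots,S_K$ of the vertex set satisfying: (B1) for each $k\in[K]$ there exists $t_k\in\{0,\dots,T\}$ such that $S_k$ is an independent set in $A^{(t_k)}$; (B2) for each $k\in[K]$ and $i\in[r]$, $|S_k\cap V_i|\ge(1+\varepsilon)\gamma_i r n\Psi$; (B3) for $2\le k\le K$, $\big|S_k\setminus\bigcup_{j<k}S_j\big|\in\left[\frac{\tilde\varepsilon}{4}n\Psi,\ \frac{\tilde\varepsilon}{2}n\Psi\right]$.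
   Context: $\mathcal{H}(r,n,p)$: random $r$-uniform $r$-partite hypergraph with vertex set $[n]\times[r]$, parts $V_i=[n]\times\{i\}$, each $e\in V_1\times\cdots\times V_r$ an edge independently with probability $p$, encoded by $A\in\{0,1\}^m$, $m=n^r$, coordinates indexed by $[m]$ in a fixed order. Interpolation path of length $T$: $A^{(0)}\sim\mathcal{H}(r,n,p)$; for $1\le t\le T$, $A^{(t)}$ is obtained from $A^{(t-1)}$ by resampling coordinate $\sigma(t)\in[m]$, $\sigma(t)\equiv t\pmod m$, independently from $\mathrm{Ber}(p)$. An independent set in $A^{(t)}$ is a vertex set containing no edge of the hypergraph encoded by $A^{(t)}$. *)

theory Defs
  imports "HOL-Probability.Probability"
begin

text \<open>Conventions (0-based): vertex set is pairs (v,i) with v < n, i < r; part V_i is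
  {0..<n} x {i}. The m = n^r coordinates are j in {0..<n^r}; coordinate j encodes the edge
  whose vertex in part i is ((j div n^i) mod n, i). A hypergraph is A :: nat => bool
  (values outside {0..<m} are irrelevant).\<close>

definition edge_vertex :: "nat \<Rightarrow> nat \<Rightarrow> nat \<Rightarrow> nat" where
  "edge_vertex n j i = (j div n ^ i) mod n"

definition vertex_set :: "nat \<Rightarrow> nat \<Rightarrow> (nat \<times> nat) set" where
  "vertex_set n r = {0..<n} \<times> {0..<r}"

definition part :: "nat \<Rightarrow> nat \<Rightarrow> (nat \<times> nat) set" where
  "part n i = {0..<n} \<times> {i}"

definition independent_set :: "nat \<Rightarrow> nat \<Rightarrow> (nat \<Rightarrow> bool) \<Rightarrow> (nat \<times> nat) set \<Rightarrow> bool" where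
  "independent_set n r A S \<longleftrightarrow>
     S \<subseteq> vertex_set n r \<and>
     \<not> (\<exists>j < n ^ r. A j \<and> (\<forall>i < r. (edge_vertex n j i, i) \<in> S))"

text \<open>Interpolation path: A0 is the initial hypergraph, B t is the fresh Bernoulli value
  used at step t (1 <= t <= T); step t resamples coordinate sigma(t) = t mod m.\<close>

fun interp_path :: "nat \<Rightarrow> (nat \<Rightarrow> bool) \<Rightarrow> (nat \<Rightarrow> bool) \<Rightarrow> nat \<Rightarrow> (nat \<Rightarrow> bool)" where
  "interp_path m A0 B 0 = A0"
| "interp_path m A0 B (Suc t) = (interp_path m A0 B t)(Suc t mod m := B (Suc t))"

definition path_pmf :: "nat \<Rightarrow> nat \<Rightarrow> real \<Rightarrow> nat \<Rightarrow> ((nat \<Rightarrow> bool) \<times> (nat \<Rightarrow> bool)) pmf" where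
  "path_pmf n r p T =
     pair_pmf (Pi_pmf {0..<n ^ r} False (\<lambda>_. bernoulli_pmf p))
              (Pi_pmf {1..T} False (\<lambda>_. bernoulli_pmf p))"

definition Psi :: "nat \<Rightarrow> (nat \<Rightarrow> real) \<Rightarrow> real \<Rightarrow> real" where
  "Psi r \<gamma> d =
     ((Max (\<gamma> ` {0..<r}) * ln d) /
      (d * real r ^ (r - 1) * (real r - 1) * (\<Prod>i<r. \<gamma> i))) powr (1 / (real r - 1))"

definition bad_sequence_exists ::
  "nat \<Rightarrow> nat \<Rightarrow> real \<Rightarrow> (nat \<Rightarrow> real) \<Rightarrow> nat \<Rightarrow> real \<Rightarrow> nat \<Rightarrow>
   (nat \<Rightarrow> bool) \<Rightarrow> (nat \<Rightarrow> bool) \<Rightarrow> bool" where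
  "bad_sequence_exists n r \<epsilon> \<gamma> K d T A0 B \<longleftrightarrow>
     (let \<Psi> = Psi r \<gamma> d; \<epsilon>' = \<epsilon> * Min (\<gamma> ` {0..<r}) in
      \<exists>S :: nat \<Rightarrow> (nat \<times> nat) set.
        (\<forall>k\<in>{1..K}. S k \<subseteq> vertex_set n r) \<and>
        (\<forall>k\<in>{1..K}. \<exists>t\<le>T. independent_set n r (interp_path (n ^ r) A0 B t) (S k)) \<and>
        (\<forall>k\<in>{1..K}. \<forall>i<r.
           real (card (S k \<inter> part n i)) \<ge> (1 + \<epsilon>) * \<gamma> i * real r * real n * \<Psi>) \<and>
        (\<forall>k\<in>{2..K}.
           \<epsilon>' / 4 * real n * \<Psi> \<le> real (card (S k - (\<Union>j\<in>{1..<k}. S j))) \<and>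
           real (card (S k - (\<Union>j\<in>{1..<k}. S j))) \<le> \<epsilon>' / 2 * real n * \<Psi>))"

end

theory Submission
  imports Defs
begin

(*
  A first moment argument over compact witnesses. A bad sequence S_1, ..., S_K determines
  times t_k, a core W0 of S_1 with about (1 + eps) gamma_i r n Psi vertices in each part, the rest
  X = S_1 - W0, and for k >= 2 the vertices N_k of S_k outside S_1, ..., S_(k-1) together with
  the remaining ones Q_k. Independence of S_k at time t_k forces every
  edge with one vertex in X (resp. N_k) and the others in W0 (resp. Q_k) to be absent at time
  t_k. These edge sets are pairwise disjoint and each coordinate of A^(t) is an independent
  Bernoulli variable (the one drawn at its last resampling), so a fixed witness occurs with
  probability at most exp (- lam (|X| + sum |N_k|)), where lam = (1 + eps/2)^(r-1) ln d / (r - 1)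
  comes from the lower bounds on the part sizes of W0 and Q_k. In the union bound the factor
  exp (- lam) per vertex of X and N_k beats the entropy of choosing them, the core W0 costs
  only exp (O(n Psi ln d)), and since |N_k| >= eps' n Psi / 4 the new vertices of K - 1 steps
  pay for the core once K is large. What remains is exp (- Psi n / 4) for large d and n.
*)

section \<open>Edges of the complete $r$-partite hypergraph\<close>

lemma edge_vertex_add_mult_low:
  assumes "a < n ^ r" "i < r"
  shows "edge_vertex n (a + n ^ r * b) i = edge_vertex n a i"
proof -
  obtain k where k: "r = Suc (i + k)" using less_imp_Suc_add[OF assms(2)] by blast
  have nr: "n ^ r = n ^ i * (n * n ^ k)" unfolding k by (simp add: power_add)
  show ?thesis
  proof (cases "n = 0")
    case True
    thus ?thesis using assms(1) unfolding k by simp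
  next
    case False
    hence "(a + n ^ r * b) div n ^ i = n * (n ^ k * b) + a div n ^ i"
      unfolding nr by (simp add: div_mult_self2 mult.assoc)
    thus ?thesis by (simp add: edge_vertex_def)
  qed
qed

lemma edge_vertex_add_mult_top:
  assumes "a < n ^ r" "b < n"
  shows "edge_vertex n (a + n ^ r * b) r = b"
proof -
  have "(a + n ^ r * b) div n ^ r = b" using assms by simp
  thus ?thesis using assms(2) by (simp add: edge_vertex_def)
qed

definition edges_within :: "nat \<Rightarrow> nat \<Rightarrow> (nat \<Rightarrow> nat set) \<Rightarrow> nat set" where
  "edges_within n r Y = {e. e < n ^ r \<and> (\<forall>i<r. edge_vertex n e i \<in> Y i)}"

lemma edges_within_Suc:
  assumes "Y r \<subseteq> {0..<n}"
  shows "edges_within n (Suc r) Y = (\<lambda>(a, b). a + n ^ r * b) ` (edges_within n r Y \<times> Y r)"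
proof (intro set_eqI iffI)
  fix e assume e: "e \<in> edges_within n (Suc r) Y"
  hence en: "e < n * n ^ r" by (simp add: edges_within_def)
  hence "0 < n" by (cases n) auto
  hence lo: "e mod n ^ r < n ^ r" by simp
  have hi: "e div n ^ r < n" using en by (rule less_mult_imp_div_less)
  have split: "e = e mod n ^ r + n ^ r * (e div n ^ r)" by simp
  have "e mod n ^ r \<in> edges_within n r Y"
    using e lo edge_vertex_add_mult_low[OF lo, of _ "e div n ^ r", folded split, symmetric]
    by (auto simp: edges_within_def)
  moreover have "e div n ^ r \<in> Y r"
    using e edge_vertex_add_mult_top[OF lo hi, folded split, symmetric]
    by (simp add: edges_within_def)
  ultimately show "e \<in> (\<lambda>(a, b). a + n ^ r * b) ` (edges_within n r Y \<times> Y r)"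
    using split by force
next
  fix e assume "e \<in> (\<lambda>(a, b). a + n ^ r * b) ` (edges_within n r Y \<times> Y r)"
  then obtain a b where ab: "a \<in> edges_within n r Y" "b \<in> Y r" "e = a + n ^ r * b" by auto
  have a: "a < n ^ r" and b: "b < n" using ab assms by (auto simp: edges_within_def)
  have "a + n ^ r * b < n ^ r * (b + 1)" using a by simp
  also have "\<dots> \<le> n ^ r * n" using b by (intro mult_le_mono2) simp
  finally have "e < n ^ Suc r" using ab by (simp add: mult.commute)
  moreover have "edge_vertex n e i \<in> Y i" if "i < Suc r" for i
    using that ab edge_vertex_add_mult_low[OF a] edge_vertex_add_mult_top[OF a b]
    by (cases "i = r") (auto simp: edges_within_def)
  ultimately show "e \<in> edges_within n (Suc r) Y" by (simp add: edges_within_def)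
qed

lemma inj_on_add_mult_power:
  fixes n :: nat
  shows "inj_on (\<lambda>(a, b). a + n ^ r * b) ({..<n ^ r} \<times> B)"
proof (rule inj_onI, clarify)
  fix a b a' b' assume a: "a < n ^ r" "a' < n ^ r" and eq: "a + n ^ r * b = a' + n ^ r * b'"
  have "a = (a + n ^ r * b) mod n ^ r" using a by simp
  also have "\<dots> = a'" using a eq by simp
  finally show "a = a' \<and> b = b'" using a eq by (cases "n = 0") (auto simp: zero_power)
qed

lemma card_edges_within:
  assumes "\<forall>i<r. Y i \<subseteq> {0..<n}"
  shows "card (edges_within n r Y) = (\<Prod>i<r. card (Y i))"
  using assms
proof (induction r)
  case 0
  have "edges_within n 0 Y = {0}" by (auto simp: edges_within_def)
  thus ?case by simp
next
  case (Suc r)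
  have "inj_on (\<lambda>(a, b). a + n ^ r * b) (edges_within n r Y \<times> Y r)"
    by (rule inj_on_subset[OF inj_on_add_mult_power]) (auto simp: edges_within_def)
  moreover have "Y r \<subseteq> {0..<n}" using Suc.prems by simp
  ultimately have "card (edges_within n (Suc r) Y) = card (edges_within n r Y) * card (Y r)"
    by (simp only: edges_within_Suc card_image card_cartesian_product)
  thus ?case using Suc by simp
qed

lemma finite_vertex_set [simp]: "finite (vertex_set n r)"
  by (simp add: vertex_set_def)

lemma card_vertex_set: "card (vertex_set n r) = n * r"
  by (simp add: vertex_set_def card_cartesian_product)

lemma card_eq_sum_card_part:
  assumes "W \<subseteq> vertex_set n r"
  shows "card W = (\<Sum>i<r. card (W \<inter> part n i))"
proof -
  have "W = (\<Union>i<r. W \<inter> part n i)"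
    using assms by (auto simp: vertex_set_def part_def)
  also have "card \<dots> = (\<Sum>i<r. card (W \<inter> part n i))"
    using assms by (intro card_UN_disjoint) (auto simp: part_def intro: finite_subset)
  finally show ?thesis .
qed

definition slice :: "(nat \<times> nat) set \<Rightarrow> nat \<Rightarrow> nat set" where
  "slice X i = {v. (v, i) \<in> X}"

lemma card_slice: "card (slice X i) = card (X \<inter> part n i)" if "X \<subseteq> vertex_set n r"
proof -
  have "X \<inter> part n i = (\<lambda>v. (v, i)) ` slice X i"
    using that by (auto simp: slice_def part_def vertex_set_def)
  moreover have "inj_on (\<lambda>v. (v, i)) (slice X i)" by (auto simp: inj_on_def)
  ultimately show ?thesis by (simp add: card_image)
qed

lemma slice_subset: "X \<subseteq> vertex_set n r \<Longrightarrow> slice X i \<subseteq> {0..<n}"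
  by (auto simp: slice_def vertex_set_def)

definition cross_edges :: "nat \<Rightarrow> nat \<Rightarrow> (nat \<times> nat) set \<Rightarrow> (nat \<times> nat) set \<Rightarrow> nat set" where
  "cross_edges n r X W = {e. e < n ^ r \<and> (\<exists>i<r. (edge_vertex n e i, i) \<in> X \<and>
       (\<forall>i'<r. i' \<noteq> i \<longrightarrow> (edge_vertex n e i', i') \<in> W))}"

lemma finite_cross_edges [simp]: "finite (cross_edges n r X W)"
  by (rule finite_subset[of _ "{..<n ^ r}"]) (auto simp: cross_edges_def)

lemma cross_edges_less: "e \<in> cross_edges n r X W \<Longrightarrow> e < n ^ r"
  unfolding cross_edges_def by blast

lemma cross_edges_vertex_in: "e \<in> cross_edges n r X W \<Longrightarrow> i < r \<Longrightarrow> (edge_vertex n e i, i) \<in> X \<union> W"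
  unfolding cross_edges_def by (cases "\<exists>j<r. j = i") auto

lemma cross_edgesE:
  assumes "e \<in> cross_edges n r X W"
  obtains i where "i < r" "(edge_vertex n e i, i) \<in> X"
  using assms unfolding cross_edges_def by blast

lemma card_cross_edges:
  assumes X: "X \<subseteq> vertex_set n r" and W: "W \<subseteq> vertex_set n r" and disj: "X \<inter> W = {}"
  shows "card (cross_edges n r X W) =
     (\<Sum>i<r. card (X \<inter> part n i) * (\<Prod>i'\<in>{..<r}-{i}. card (W \<inter> part n i')))"
proof -
  define Y where "Y = (\<lambda>i i'. if i' = i then slice X i else slice W i')"
  have "cross_edges n r X W = (\<Union>i<r. edges_within n r (Y i))"
    by (auto simp: cross_edges_def edges_within_def Y_def slice_def)
  also have "card \<dots> = (\<Sum>i<r. card (edges_within n r (Y i)))"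
  proof (rule card_UN_disjoint)
    show "\<forall>i\<in>{..<r}. finite (edges_within n r (Y i))"
      by (auto intro: finite_subset[of _ "{..<n ^ r}"] simp: edges_within_def)
    show "\<forall>i\<in>{..<r}. \<forall>j\<in>{..<r}. i \<noteq> j \<longrightarrow> edges_within n r (Y i) \<inter> edges_within n r (Y j) = {}"
      using disj by (auto simp: edges_within_def Y_def slice_def)
  qed simp
  also have "\<dots> = (\<Sum>i<r. card (X \<inter> part n i) * (\<Prod>i'\<in>{..<r}-{i}. card (W \<inter> part n i')))"
  proof (rule sum.cong[OF refl])
    fix i assume i: "i \<in> {..<r}"
    have "\<forall>i'<r. Y i i' \<subseteq> {0..<n}" using slice_subset[OF X] slice_subset[OF W] by (auto simp: Y_def)
    hence "card (edges_within n r (Y i)) = (\<Prod>i'<r. card (Y i i'))" by (rule card_edges_within)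
    also have "\<dots> = card (Y i i) * (\<Prod>i'\<in>{..<r}-{i}. card (Y i i'))"
      using i by (subst prod.remove[of "{..<r}" i]) auto
    finally show "card (edges_within n r (Y i)) = card (X \<inter> part n i) * (\<Prod>i'\<in>{..<r}-{i}. card (W \<inter> part n i'))"
      by (simp add: Y_def card_slice[OF X] card_slice[OF W])
  qed
  finally show ?thesis .
qed

lemma card_cross_edges_lower_bound:
  fixes p lam :: real and \<rho> :: "nat \<Rightarrow> real"
  assumes X: "X \<subseteq> vertex_set n r" and W: "W \<subseteq> vertex_set n r" and disj: "X \<inter> W = {}"
    and p: "0 \<le> p"
    and lam: "\<forall>i<r. lam \<le> p * (\<Prod>i'\<in>{..<r}-{i}. \<rho> i')"
    and \<rho>: "\<forall>i<r. 0 \<le> \<rho> i \<and> \<rho> i \<le> real (card (W \<inter> part n i))"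
  shows "lam * real (card X) \<le> p * real (card (cross_edges n r X W))"
proof -
  have "lam * real (card X) = (\<Sum>i<r. real (card (X \<inter> part n i)) * lam)"
    by (simp add: card_eq_sum_card_part[OF X] sum_distrib_left mult.commute)
  also have "\<dots> \<le> (\<Sum>i<r. real (card (X \<inter> part n i)) * (p * (\<Prod>i'\<in>{..<r}-{i}. real (card (W \<inter> part n i')))))"
  proof (intro sum_mono mult_left_mono)
    fix i assume "i \<in> {..<r}"
    moreover have "(\<Prod>i'\<in>{..<r}-{i}. \<rho> i') \<le> (\<Prod>i'\<in>{..<r}-{i}. real (card (W \<inter> part n i')))"
      using \<rho> by (intro prod_mono) auto
    ultimately show "lam \<le> p * (\<Prod>i'\<in>{..<r}-{i}. real (card (W \<inter> part n i')))"
      using lam p by (meson lessThan_iff mult_left_mono order_trans)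
  qed simp
  also have "\<dots> = p * real (card (cross_edges n r X W))"
    by (simp add: card_cross_edges[OF X W disj] sum_distrib_left algebra_simps)
  finally show ?thesis .
qed

section \<open>Probabilities along the interpolation path\<close>

fun last_resample :: "nat \<Rightarrow> nat \<Rightarrow> nat \<Rightarrow> nat option" where
  "last_resample m 0 e = None"
| "last_resample m (Suc t) e = (if Suc t mod m = e then Some (Suc t) else last_resample m t e)"

lemma interp_path_last_resample:
  "interp_path m A0 B t e = (case last_resample m t e of None \<Rightarrow> A0 e | Some s \<Rightarrow> B s)"
  by (induction t) auto

lemma last_resample_SomeD: "last_resample m t e = Some s \<Longrightarrow> 1 \<le> s \<and> s \<le> t \<and> s mod m = e"
  by (induction t) (auto split: if_splits)

lemma measure_pair_pmf_times:
  "measure_pmf.prob (pair_pmf M N) (A \<times> B) = measure_pmf.prob M A * measure_pmf.prob N B"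
proof -
  have "measure_pmf.prob (pair_pmf M N) (A \<times> B) = measure_pmf.prob (pair_pmf M N) ((A \<inter> set_pmf M) \<times> (B \<inter> set_pmf N))"
    by (subst measure_Int_set_pmf[symmetric]) (auto intro: arg_cong[where f = "measure_pmf.prob _"])
  also have "\<dots> = measure_pmf.prob M (A \<inter> set_pmf M) * measure_pmf.prob N (B \<inter> set_pmf N)"
    by (rule measure_pmf_prob_product) auto
  finally show ?thesis by (simp add: measure_Int_set_pmf)
qed

lemma prob_Pi_bernoulli_all_False:
  fixes p :: real
  assumes "finite I" "J \<subseteq> I" "0 \<le> p" "p \<le> 1"
  shows "measure_pmf.prob (Pi_pmf I False (\<lambda>_. bernoulli_pmf p)) {f. \<forall>x\<in>J. \<not> f x} = (1 - p) ^ card J"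
proof -
  have "{f. \<forall>x\<in>J. \<not> f x} = Pi I (\<lambda>x. if x \<in> J then {False} else UNIV)"
    using assms(2) by (auto simp: Pi_def)
  hence "measure_pmf.prob (Pi_pmf I False (\<lambda>_. bernoulli_pmf p)) {f. \<forall>x\<in>J. \<not> f x}
      = (\<Prod>x\<in>I. if x \<in> J then 1 - p else 1)"
    using assms by (simp add: measure_Pi_pmf_Pi measure_pmf_single if_distrib cong: if_cong)
  also have "\<dots> = (1 - p) ^ card J"
    using assms(1,2) by (simp add: prod.If_cases Int_absorb1)
  finally show ?thesis .
qed

lemma interp_path_avoids_eq_Times:
  "{(A0, B). \<forall>e\<in>E. \<not> interp_path m A0 B (\<tau> e) e}
     = {A0. \<forall>e\<in>{e\<in>E. last_resample m (\<tau> e) e = None}. \<not> A0 e}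
       \<times> {B. \<forall>s\<in>{s. \<exists>e\<in>E. last_resample m (\<tau> e) e = Some s}. \<not> B s}"
  by (auto simp: interp_path_last_resample split: option.splits)

text \<open>Distinct coordinates have distinct last resampling times, so the event involves
  \<open>card E\<close> distinct independent Bernoulli variables.\<close>

lemma prob_interp_path_avoids:
  fixes p :: real
  assumes "0 < m" "E \<subseteq> {0..<m}" "\<forall>e\<in>E. \<tau> e \<le> T" "0 \<le> p" "p \<le> 1"
  shows "measure_pmf.prob (pair_pmf (Pi_pmf {0..<m} False (\<lambda>_. bernoulli_pmf p))
                                    (Pi_pmf {1..T} False (\<lambda>_. bernoulli_pmf p)))
           {(A0, B). \<forall>e\<in>E. \<not> interp_path m A0 B (\<tau> e) e} = (1 - p) ^ card E"
proof -
  define E0 where "E0 = {e\<in>E. last_resample m (\<tau> e) e = None}"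
  define E1 where "E1 = E - E0"
  define s where "s = (\<lambda>e. the (last_resample m (\<tau> e) e))"
  have s: "last_resample m (\<tau> e) e = Some (s e)" if "e \<in> E1" for e
    using that by (auto simp: E1_def E0_def s_def)
  have sD: "1 \<le> s e \<and> s e \<le> T \<and> s e mod m = e" if "e \<in> E1" for e
    using last_resample_SomeD[OF s[OF that]] assms(3) that by (auto simp: E1_def)
  have times: "{s. \<exists>e\<in>E. last_resample m (\<tau> e) e = Some s} = s ` E1"
    using s by (force simp: E1_def E0_def)
  have "inj_on s E1"
    by (rule inj_onI) (metis sD)
  hence "card (s ` E1) = card E1" by (rule card_image)
  moreover have "card E = card E0 + card E1"
  proof -
    have "E = E0 \<union> E1" "E0 \<inter> E1 = {}" by (auto simp: E0_def E1_def)
    moreover have "finite E" using assms(2) finite_subset by blast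
    ultimately show ?thesis by (metis card_Un_disjoint finite_Un)
  qed
  moreover have "E0 \<subseteq> {0..<m}" "s ` E1 \<subseteq> {1..T}" using assms(2) sD by (auto simp: E0_def)
  ultimately show ?thesis
    unfolding interp_path_avoids_eq_Times measure_pair_pmf_times E0_def[symmetric] times
    using prob_Pi_bernoulli_all_False[of "{0..<m}" E0 p] prob_Pi_bernoulli_all_False[of "{1..T}" "s ` E1" p]
      assms(4,5) by (simp add: power_add)
qed

section \<open>Weighted counting of subsets\<close>

lemma sum_power_card_Pow:
  fixes y :: "'a :: comm_semiring_1"
  assumes "finite S"
  shows "(\<Sum>A\<in>Pow S. y ^ card A) = (1 + y) ^ card S"
proof -
  have "(1 + y) ^ card S = (\<Prod>x\<in>S. y + 1)" by (simp add: add.commute)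
  also have "\<dots> = (\<Sum>A\<in>Pow S. (\<Prod>x\<in>A. y) * (\<Prod>x\<in>S - A. 1))"
    using assms by (rule prod_add)
  also have "\<dots> = (\<Sum>A\<in>Pow S. y ^ card A)" by simp
  finally show ?thesis ..
qed

lemma card_small_subsets_le:
  fixes y :: real
  assumes "finite V" "0 < y" "y \<le> 1"
  shows "real (card {W\<in>Pow V. card W \<le> M}) \<le> (1 + y) ^ card V / y ^ M"
proof -
  have "real (card {W\<in>Pow V. card W \<le> M}) * y ^ M = (\<Sum>W\<in>{W\<in>Pow V. card W \<le> M}. y ^ M)"
    by simp
  also have "\<dots> \<le> (\<Sum>W\<in>{W\<in>Pow V. card W \<le> M}. y ^ card W)"
    by (rule sum_mono) (use assms in \<open>auto intro: power_decreasing\<close>)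
  also have "\<dots> \<le> (\<Sum>W\<in>Pow V. y ^ card W)"
    by (rule sum_mono2) (use assms in auto)
  also have "\<dots> = (1 + y) ^ card V" by (rule sum_power_card_Pow[OF assms(1)])
  finally show ?thesis using assms by (simp add: pos_le_divide_eq)
qed

lemma sum_power_card_large_subsets_le:
  fixes y z \<nu> :: real
  assumes "finite V" "0 < z" "z \<le> y"
  shows "(\<Sum>N\<in>{N\<in>Pow V. \<nu> \<le> real (card N)}. z ^ card N) \<le> (z / y) powr \<nu> * (1 + y) ^ card V"
proof -
  have zy: "0 < z / y" "z / y \<le> 1" using assms by auto
  have "z ^ card N \<le> (z / y) powr \<nu> * y ^ card N" if "\<nu> \<le> real (card N)" for N
  proof -
    have "z ^ card N = (z / y) powr real (card N) * y ^ card N"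
      using assms zy by (simp add: powr_realpow power_divide)
    also have "\<dots> \<le> (z / y) powr \<nu> * y ^ card N"
      using that zy assms by (intro mult_right_mono powr_mono') auto
    finally show ?thesis .
  qed
  hence "(\<Sum>N\<in>{N\<in>Pow V. \<nu> \<le> real (card N)}. z ^ card N)
      \<le> (z / y) powr \<nu> * (\<Sum>N\<in>{N\<in>Pow V. \<nu> \<le> real (card N)}. y ^ card N)"
    by (auto simp: sum_distrib_left intro: sum_mono)
  also have "\<dots> \<le> (z / y) powr \<nu> * (\<Sum>N\<in>Pow V. y ^ card N)"
    using assms by (intro mult_left_mono sum_mono2) auto
  finally show ?thesis by (simp add: sum_power_card_Pow[OF assms(1)])
qed

lemma sum_power_card_small_subsets_le:
  fixes c w :: real
  assumes "finite V" "1 \<le> c" "0 < w" "w \<le> 1"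
  shows "(\<Sum>W\<in>{W\<in>Pow V. card W \<le> M}. c ^ card W) \<le> c ^ M * ((1 + w) ^ card V / w ^ M)"
proof -
  have "(\<Sum>W\<in>{W\<in>Pow V. card W \<le> M}. c ^ card W) \<le> (\<Sum>W\<in>{W\<in>Pow V. card W \<le> M}. c ^ M)"
    using assms(2) by (intro sum_mono power_increasing) auto
  also have "\<dots> = real (card {W\<in>Pow V. card W \<le> M}) * c ^ M" by simp
  also have "\<dots> \<le> ((1 + w) ^ card V / w ^ M) * c ^ M"
    using card_small_subsets_le[OF assms(1,3,4)] assms(2) by (intro mult_right_mono) simp_all
  finally show ?thesis by (simp only: mult.commute)
qed

lemma sum_PiE_prod_power_card_le:
  fixes y z \<nu> :: real
  assumes "finite V" "finite I" "0 < z" "z \<le> y"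
  shows "(\<Sum>N\<in>PiE I (\<lambda>_. {N\<in>Pow V. \<nu> \<le> real (card N)}). \<Prod>k\<in>I. z ^ card (N k))
           \<le> ((z / y) powr \<nu> * (1 + y) ^ card V) ^ card I"
proof -
  have "(\<Sum>N\<in>PiE I (\<lambda>_. {N\<in>Pow V. \<nu> \<le> real (card N)}). \<Prod>k\<in>I. z ^ card (N k))
      = (\<Prod>k\<in>I. \<Sum>N\<in>{N\<in>Pow V. \<nu> \<le> real (card N)}. z ^ card N)"
    using assms by (intro prod_sum_PiE[symmetric]) auto
  also have "\<dots> \<le> (\<Prod>k\<in>I. (z / y) powr \<nu> * (1 + y) ^ card V)"
    using sum_power_card_large_subsets_le[OF assms(1,3,4)] assms(3)
    by (intro prod_mono) (auto intro!: sum_nonneg)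
  finally show ?thesis by simp
qed

section \<open>Witnesses of a bad sequence\<close>

text \<open>A witness \<open>(t, W0, X, N, Q)\<close> records the times \<open>t k\<close>, a core \<open>W0 \<subseteq> S 1\<close> with
  \<open>\<lceil>q i\<rceil>\<close> vertices in part \<open>i\<close>, \<open>X = S 1 - W0\<close>, and for \<open>k \<ge> 2\<close> the new vertices
  \<open>N k = S k - (\<Union>j<k. S j)\<close> and the old ones \<open>Q k = S k \<inter> (\<Union>j<k. S j)\<close>; then
  \<open>prefix_union W0 X N k = (\<Union>j<k. S j)\<close>.\<close>

definition prefix_union ::
  "(nat \<times> nat) set \<Rightarrow> (nat \<times> nat) set \<Rightarrow> (nat \<Rightarrow> (nat \<times> nat) set) \<Rightarrow> nat \<Rightarrow> (nat \<times> nat) set" where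
  "prefix_union W0 X N k = W0 \<union> X \<union> (\<Union>j\<in>{2..<k}. N j)"

definition witness_valid :: "nat \<Rightarrow> nat \<Rightarrow> nat \<Rightarrow> (nat \<Rightarrow> real) \<Rightarrow> nat \<Rightarrow> real \<Rightarrow>
    (nat \<times> nat) set \<Rightarrow> (nat \<times> nat) set \<Rightarrow> (nat \<Rightarrow> (nat \<times> nat) set) \<Rightarrow> (nat \<Rightarrow> (nat \<times> nat) set) \<Rightarrow> bool"
where
  "witness_valid n r K \<rho> M \<nu> W0 X N Q \<longleftrightarrow>
     W0 \<subseteq> vertex_set n r \<and> card W0 \<le> M \<and> (\<forall>i<r. \<rho> i \<le> real (card (W0 \<inter> part n i))) \<and>
     X \<subseteq> vertex_set n r \<and> X \<inter> W0 = {} \<and>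
     (\<forall>k\<in>{2..K}. N k \<subseteq> vertex_set n r \<and> \<nu> \<le> real (card (N k)) \<and>
        N k \<inter> prefix_union W0 X N k = {} \<and> Q k \<subseteq> prefix_union W0 X N k \<and>
        (\<forall>i<r. \<rho> i \<le> real (card (Q k \<inter> part n i))))"

definition witness_edges ::
  "nat \<Rightarrow> nat \<Rightarrow> nat \<Rightarrow> (nat \<times> nat) set \<Rightarrow> (nat \<times> nat) set \<Rightarrow> (nat \<Rightarrow> (nat \<times> nat) set) \<Rightarrow> (nat \<Rightarrow> (nat \<times> nat) set) \<Rightarrow> nat set"
where
  "witness_edges n r K W0 X N Q = cross_edges n r X W0 \<union> (\<Union>k\<in>{2..K}. cross_edges n r (N k) (Q k))"

definition witness_event :: "nat \<Rightarrow> nat \<Rightarrow> nat \<Rightarrow> (nat \<Rightarrow> real) \<Rightarrow> nat \<Rightarrow> real \<Rightarrow> (nat \<Rightarrow> nat) \<Rightarrow>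
    (nat \<times> nat) set \<Rightarrow> (nat \<times> nat) set \<Rightarrow> (nat \<Rightarrow> (nat \<times> nat) set) \<Rightarrow> (nat \<Rightarrow> (nat \<times> nat) set) \<Rightarrow>
    ((nat \<Rightarrow> bool) \<times> (nat \<Rightarrow> bool)) set"
where
  "witness_event n r K \<rho> M \<nu> t W0 X N Q = {(A0, B). witness_valid n r K \<rho> M \<nu> W0 X N Q \<and>
     (\<forall>e\<in>cross_edges n r X W0. \<not> interp_path (n ^ r) A0 B (t 1) e) \<and>
     (\<forall>k\<in>{2..K}. \<forall>e\<in>cross_edges n r (N k) (Q k). \<not> interp_path (n ^ r) A0 B (t k) e)}"

lemma prefix_union_mono: "j \<le> k \<Longrightarrow> prefix_union W0 X N j \<subseteq> prefix_union W0 X N k"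
  unfolding prefix_union_def by auto

lemma witness_valid_subsets:
  assumes "witness_valid n r K \<rho> M \<nu> W0 X N Q" "k \<in> {2..K}"
  shows "Q k \<subseteq> vertex_set n r" "N k \<inter> Q k = {}"
proof -
  have "prefix_union W0 X N k \<subseteq> vertex_set n r"
    using assms unfolding prefix_union_def witness_valid_def by auto
  moreover have "Q k \<subseteq> prefix_union W0 X N k" "N k \<inter> prefix_union W0 X N k = {}"
    using assms by (simp_all add: witness_valid_def)
  ultimately show "Q k \<subseteq> vertex_set n r" "N k \<inter> Q k = {}" by blast+
qed

lemma witness_cross_edges_disjoint:
  assumes v: "witness_valid n r K \<rho> M \<nu> W0 X N Q" and k: "k \<in> {2..K}"
    and sub: "Y \<union> Z \<subseteq> prefix_union W0 X N k"
  shows "cross_edges n r Y Z \<inter> cross_edges n r (N k) (Q k) = {}"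
proof -
  have "N k \<inter> prefix_union W0 X N k = {}" using v k by (simp add: witness_valid_def)
  thus ?thesis using sub by (blast elim: cross_edgesE dest: cross_edges_vertex_in)
qed

lemma prefix_union_contains_earlier:
  assumes "witness_valid n r K \<rho> M \<nu> W0 X N Q" "j \<in> {2..<k}" "k \<le> K"
  shows "N j \<union> Q j \<subseteq> prefix_union W0 X N k"
proof -
  have "Q j \<subseteq> prefix_union W0 X N j" using assms by (simp add: witness_valid_def)
  thus ?thesis using prefix_union_mono[of j k W0 X N] assms(2) by (auto simp: prefix_union_def)
qed

lemma card_witness_edges:
  assumes v: "witness_valid n r K \<rho> M \<nu> W0 X N Q"
  shows "card (witness_edges n r K W0 X N Q)
           = card (cross_edges n r X W0) + (\<Sum>k\<in>{2..K}. card (cross_edges n r (N k) (Q k)))"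
proof -
  have "card (\<Union>k\<in>{2..K}. cross_edges n r (N k) (Q k)) = (\<Sum>k\<in>{2..K}. card (cross_edges n r (N k) (Q k)))"
  proof (rule card_UN_disjoint)
    have "cross_edges n r (N j) (Q j) \<inter> cross_edges n r (N k) (Q k) = {}"
      if "j \<in> {2..K}" "k \<in> {2..K}" "j < k" for j k
      using that by (intro witness_cross_edges_disjoint[OF v] prefix_union_contains_earlier[OF v]) auto
    thus "\<forall>j\<in>{2..K}. \<forall>k\<in>{2..K}. j \<noteq> k \<longrightarrow> cross_edges n r (N j) (Q j) \<inter> cross_edges n r (N k) (Q k) = {}"
      by (metis inf_commute linorder_neqE_nat)
  qed auto
  moreover have "cross_edges n r X W0 \<inter> cross_edges n r (N k) (Q k) = {}" if "k \<in> {2..K}" for k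
    using that by (intro witness_cross_edges_disjoint[OF v]) (auto simp: prefix_union_def)
  hence "cross_edges n r X W0 \<inter> (\<Union>k\<in>{2..K}. cross_edges n r (N k) (Q k)) = {}" by blast
  ultimately show ?thesis by (simp add: witness_edges_def card_Un_disjoint)
qed

lemma card_witness_edges_lower_bound:
  fixes p lam :: real
  assumes v: "witness_valid n r K \<rho> M \<nu> W0 X N Q" and p: "0 \<le> p"
    and lam: "\<forall>i<r. lam \<le> p * (\<Prod>i'\<in>{..<r}-{i}. \<rho> i')" and \<rho>: "\<forall>i<r. 0 \<le> \<rho> i"
  shows "lam * (real (card X) + (\<Sum>k\<in>{2..K}. real (card (N k))))
           \<le> p * real (card (witness_edges n r K W0 X N Q))"
proof -
  have "lam * real (card X) \<le> p * real (card (cross_edges n r X W0))"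
    by (rule card_cross_edges_lower_bound) (use v p lam \<rho> in \<open>auto simp: witness_valid_def\<close>)
  moreover have "lam * real (card (N k)) \<le> p * real (card (cross_edges n r (N k) (Q k)))"
    if k: "k \<in> {2..K}" for k
    by (rule card_cross_edges_lower_bound)
      (use v p lam \<rho> k witness_valid_subsets[OF v k] in \<open>auto simp: witness_valid_def\<close>)
  hence "(\<Sum>k\<in>{2..K}. lam * real (card (N k))) \<le> (\<Sum>k\<in>{2..K}. p * real (card (cross_edges n r (N k) (Q k))))"
    by (rule sum_mono)
  ultimately show ?thesis
    by (simp add: card_witness_edges[OF v] distrib_left sum_distrib_left)
qed

lemma one_plus_power_le_exp:
  fixes x :: real
  assumes "- 1 \<le> x"
  shows "(1 + x) ^ k \<le> exp (real k * x)"
proof -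
  have "(1 + x) ^ k \<le> exp x ^ k"
    using assms exp_ge_add_one_self[of x] by (intro power_mono) auto
  thus ?thesis by (simp add: exp_of_nat_mult)
qed

lemma prob_witness_event_le:
  fixes p lam :: real
  assumes n: "0 < n" and p: "0 \<le> p" "p \<le> 1"
    and t: "\<forall>k\<in>{1..K}. t k \<le> T" and K: "1 \<le> K"
    and lam: "\<forall>i<r. lam \<le> p * (\<Prod>i'\<in>{..<r}-{i}. \<rho> i')" and \<rho>: "\<forall>i<r. 0 \<le> \<rho> i"
  shows "measure_pmf.prob (path_pmf n r p T) (witness_event n r K \<rho> M \<nu> t W0 X N Q)
           \<le> exp (- lam * (real (card X) + (\<Sum>k\<in>{2..K}. real (card (N k)))))"
proof (cases "witness_valid n r K \<rho> M \<nu> W0 X N Q")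
  case False
  thus ?thesis by (simp add: witness_event_def)
next
  case v: True
  define E where "E = witness_edges n r K W0 X N Q"
  define cls where "cls = (\<lambda>e. SOME k. k \<in> {2..K} \<and> e \<in> cross_edges n r (N k) (Q k))"
  define \<tau> where "\<tau> = (\<lambda>e. if e \<in> cross_edges n r X W0 then t 1 else t (cls e))"
  have cls: "cls e \<in> {2..K} \<and> e \<in> cross_edges n r (N (cls e)) (Q (cls e))"
    if "e \<in> E" "e \<notin> cross_edges n r X W0" for e
    using that unfolding cls_def E_def witness_edges_def by (metis (mono_tags, lifting) UN_E UnE someI)
  have "witness_event n r K \<rho> M \<nu> t W0 X N Q \<subseteq> {(A0, B). \<forall>e\<in>E. \<not> interp_path (n ^ r) A0 B (\<tau> e) e}"
  proof clarify
    fix A0 B e assume "(A0, B) \<in> witness_event n r K \<rho> M \<nu> t W0 X N Q" "e \<in> E"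
      "interp_path (n ^ r) A0 B (\<tau> e) e"
    thus False using cls[of e] by (cases "e \<in> cross_edges n r X W0") (auto simp: witness_event_def \<tau>_def)
  qed
  hence "measure_pmf.prob (path_pmf n r p T) (witness_event n r K \<rho> M \<nu> t W0 X N Q)
      \<le> measure_pmf.prob (path_pmf n r p T) {(A0, B). \<forall>e\<in>E. \<not> interp_path (n ^ r) A0 B (\<tau> e) e}"
    by (rule measure_pmf.finite_measure_mono) simp
  also have "\<dots> = (1 - p) ^ card E"
    unfolding path_pmf_def
  proof (rule prob_interp_path_avoids)
    show "E \<subseteq> {0..<n ^ r}"
      unfolding E_def witness_edges_def by (auto dest: cross_edges_less)
    have "t (cls e) \<le> T" if "e \<in> E" "e \<notin> cross_edges n r X W0" for e
      using t cls[OF that] by force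
    thus "\<forall>e\<in>E. \<tau> e \<le> T" using t K by (simp add: \<tau>_def)
  qed (use n p in auto)
  also have "\<dots> \<le> exp (- p * real (card E))"
    using one_plus_power_le_exp[of "- p" "card E"] p by (simp add: mult.commute)
  also have "\<dots> \<le> exp (- lam * (real (card X) + (\<Sum>k\<in>{2..K}. real (card (N k)))))"
    using card_witness_edges_lower_bound[OF v p(1) lam \<rho>] by (simp add: E_def)
  finally show ?thesis .
qed

lemma UN_atLeastLessThan_eq_first_Un_new:
  fixes S :: "nat \<Rightarrow> 'a set"
  assumes "2 \<le> k"
  shows "(\<Union>j\<in>{1..<k}. S j) = S 1 \<union> (\<Union>j\<in>{2..<k}. S j - (\<Union>l\<in>{1..<j}. S l))"
  using assms
proof (induction k rule: dec_induct)
  case base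
  have "{1..<2::nat} = {1}" by auto
  thus ?case by simp
next
  case (step k)
  have "{1..<Suc k} = insert k {1..<k}" "{2..<Suc k} = insert k {2..<k}" using step.hyps by auto
  thus ?case using step.IH by auto
qed

lemma obtain_subset_card_part:
  assumes "\<forall>i<r. c i \<le> card (S \<inter> part n i)"
  obtains W where "W \<subseteq> S" "\<forall>i<r. card (W \<inter> part n i) = c i" "card W \<le> (\<Sum>i<r. c i)"
proof -
  have "\<forall>i. \<exists>Y. i < r \<longrightarrow> Y \<subseteq> S \<inter> part n i \<and> card Y = c i"
    using assms by (meson obtain_subset_with_card_n)
  then obtain Y where Y: "\<And>i. i < r \<Longrightarrow> Y i \<subseteq> S \<inter> part n i \<and> card (Y i) = c i"
    by metis
  show ?thesis
  proof (rule that)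
    show "(\<Union>i<r. Y i) \<subseteq> S" using Y by blast
    have "(\<Union>i<r. Y i) \<inter> part n i = Y i" if "i < r" for i
      using Y that by (auto simp: part_def)
    thus "\<forall>i<r. card ((\<Union>i<r. Y i) \<inter> part n i) = c i" using Y by simp
    show "card (\<Union>i<r. Y i) \<le> (\<Sum>i<r. c i)"
      using card_UN_le[of "{..<r}" Y] Y by simp
  qed
qed

lemma card_Int_le_card_Int_Int_plus_card_Diff:
  assumes "finite S"
  shows "card (S \<inter> P) \<le> card (S \<inter> U \<inter> P) + card (S - U)"
proof -
  have "S \<inter> P \<subseteq> (S \<inter> U \<inter> P) \<union> (S - U)" by blast
  hence "card (S \<inter> P) \<le> card ((S \<inter> U \<inter> P) \<union> (S - U))"
    using assms by (intro card_mono) auto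
  also have "\<dots> \<le> card (S \<inter> U \<inter> P) + card (S - U)" by (rule card_Un_le)
  finally show ?thesis .
qed

lemma independent_set_not_edge:
  "independent_set n r A S \<Longrightarrow> e < n ^ r \<Longrightarrow> \<forall>i<r. (edge_vertex n e i, i) \<in> S \<Longrightarrow> \<not> A e"
  unfolding independent_set_def by blast

lemma witness_valid_of_sequence:
  fixes S :: "nat \<Rightarrow> (nat \<times> nat) set" and q \<rho> :: "nat \<Rightarrow> real" and \<nu>lo \<nu>hi :: real
  defines "U \<equiv> \<lambda>k. \<Union>j\<in>{1..<k}. S j"
  assumes K: "1 \<le> K"
    and S1: "\<forall>k\<in>{1..K}. S k \<subseteq> vertex_set n r"
    and S3: "\<forall>k\<in>{1..K}. \<forall>i<r. q i \<le> real (card (S k \<inter> part n i))"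
    and S4: "\<forall>k\<in>{2..K}. \<nu>lo \<le> real (card (S k - U k)) \<and> real (card (S k - U k)) \<le> \<nu>hi"
    and \<rho>q: "\<forall>i<r. \<rho> i \<le> q i - \<nu>hi" and \<nu>hi: "0 \<le> \<nu>hi"
    and M: "(\<Sum>i<r. nat \<lceil>q i\<rceil>) \<le> M"
    and W0: "W0 \<subseteq> S 1" "\<forall>i<r. card (W0 \<inter> part n i) = nat \<lceil>q i\<rceil>" "card W0 \<le> (\<Sum>i<r. nat \<lceil>q i\<rceil>)"
  shows "witness_valid n r K \<rho> M \<nu>lo W0 (S 1 - W0) (restrict (\<lambda>k. S k - U k) {2..K})
           (restrict (\<lambda>k. S k \<inter> U k) {2..K})"
proof -
  define X where "X = S 1 - W0"
  define N where "N = restrict (\<lambda>k. S k - U k) {2..K}"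
  define Q where "Q = restrict (\<lambda>k. S k \<inter> U k) {2..K}"
  have S1': "S 1 \<subseteq> vertex_set n r" using S1 K by simp
  have prefix: "prefix_union W0 X N k = U k" if k: "k \<in> {2..K}" for k
  proof -
    have "(\<Union>j\<in>{2..<k}. S j - U j) = (\<Union>j\<in>{2..<k}. N j)" using k by (auto simp: N_def)
    thus ?thesis using W0(1) k UN_atLeastLessThan_eq_first_Un_new[of k S]
      by (auto simp: prefix_union_def X_def U_def)
  qed
  have Q_part: "\<rho> i \<le> real (card (Q k \<inter> part n i))" if k: "k \<in> {2..K}" and i: "i < r" for k i
  proof -
    have "S k \<subseteq> vertex_set n r" using S1 k by simp
    hence "finite (S k)" by (rule finite_subset) simp
    hence "card (S k \<inter> part n i) \<le> card (S k \<inter> U k \<inter> part n i) + card (S k - U k)"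
      by (rule card_Int_le_card_Int_Int_plus_card_Diff)
    moreover have "Q k = S k \<inter> U k" using k by (simp add: Q_def)
    moreover have "q i \<le> real (card (S k \<inter> part n i))" using S3 k i by simp
    moreover have "real (card (S k - U k)) \<le> \<nu>hi" using S4 k by simp
    ultimately show ?thesis using \<rho>q i by fastforce
  qed
  show ?thesis
    unfolding witness_valid_def X_def[symmetric] N_def[symmetric] Q_def[symmetric]
  proof (intro conjI ballI allI impI)
    show "W0 \<subseteq> vertex_set n r" "X \<subseteq> vertex_set n r" using W0(1) S1' by (auto simp: X_def)
    show "card W0 \<le> M" using W0(3) M by linarith
    show "\<rho> i \<le> real (card (W0 \<inter> part n i))" if "i < r" for i
    proof -
      have "\<rho> i \<le> q i" using \<rho>q \<nu>hi that by force
      also have "\<dots> \<le> real (nat \<lceil>q i\<rceil>)" by (rule real_nat_ceiling_ge)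
      finally show ?thesis using W0(2) that by simp
    qed
    show "X \<inter> W0 = {}" by (auto simp: X_def)
    fix k assume k: "k \<in> {2..K}"
    show "N k \<subseteq> vertex_set n r" "\<nu>lo \<le> real (card (N k))"
      using k S1 S4 by (auto simp: N_def)
    show "N k \<inter> prefix_union W0 X N k = {}" "Q k \<subseteq> prefix_union W0 X N k"
      using k prefix[OF k] by (auto simp: N_def Q_def)
    show "\<rho> i \<le> real (card (Q k \<inter> part n i))" if "i < r" for i using Q_part k that .
  qed
qed

lemma bad_sequence_imp_witness_event:
  fixes q \<rho> :: "nat \<Rightarrow> real" and \<nu>lo \<nu>hi :: real
  assumes K: "1 \<le> K"
    and S1: "\<forall>k\<in>{1..K}. S k \<subseteq> vertex_set n r"
    and S2: "\<forall>k\<in>{1..K}. \<exists>t\<le>T. independent_set n r (interp_path (n ^ r) A0 B t) (S k)"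
    and S3: "\<forall>k\<in>{1..K}. \<forall>i<r. q i \<le> real (card (S k \<inter> part n i))"
    and S4: "\<forall>k\<in>{2..K}. \<nu>lo \<le> real (card (S k - (\<Union>j\<in>{1..<k}. S j))) \<and>
                         real (card (S k - (\<Union>j\<in>{1..<k}. S j))) \<le> \<nu>hi"
    and \<rho>q: "\<forall>i<r. \<rho> i \<le> q i - \<nu>hi" and \<nu>hi: "0 \<le> \<nu>hi"
    and M: "(\<Sum>i<r. nat \<lceil>q i\<rceil>) \<le> M"
  shows "\<exists>t\<in>PiE {1..K} (\<lambda>_. {0..T}). \<exists>W0\<in>{W\<in>Pow (vertex_set n r). card W \<le> M}.
          \<exists>X\<in>Pow (vertex_set n r). \<exists>N\<in>PiE {2..K} (\<lambda>_. {N\<in>Pow (vertex_set n r). \<nu>lo \<le> real (card N)}).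
          \<exists>Q\<in>PiE {2..K} (\<lambda>_. Pow (W0 \<union> X \<union> (\<Union>j\<in>{2..K}. N j))).
            (A0, B) \<in> witness_event n r K \<rho> M \<nu>lo t W0 X N Q"
proof -
  obtain t0 where t0: "\<forall>k\<in>{1..K}. t0 k \<le> T \<and> independent_set n r (interp_path (n ^ r) A0 B (t0 k)) (S k)"
    using bchoice[OF S2] by blast
  define t where "t = restrict t0 {1..K}"
  have "\<forall>i<r. nat \<lceil>q i\<rceil> \<le> card (S 1 \<inter> part n i)"
    using S3 K by (auto simp: ceiling_le_iff nat_le_iff)
  then obtain W0 where W0: "W0 \<subseteq> S 1" "\<forall>i<r. card (W0 \<inter> part n i) = nat \<lceil>q i\<rceil>"
      "card W0 \<le> (\<Sum>i<r. nat \<lceil>q i\<rceil>)"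
    by (rule obtain_subset_card_part)
  define X where "X = S 1 - W0"
  define U where "U = (\<lambda>k. \<Union>j\<in>{1..<k}. S j)"
  define N where "N = restrict (\<lambda>k. S k - U k) {2..K}"
  define Q where "Q = restrict (\<lambda>k. S k \<inter> U k) {2..K}"
  have valid: "witness_valid n r K \<rho> M \<nu>lo W0 X N Q"
    unfolding X_def N_def Q_def U_def
    by (rule witness_valid_of_sequence[OF K S1 S3 S4 \<rho>q \<nu>hi M W0])
  have "(A0, B) \<in> witness_event n r K \<rho> M \<nu>lo t W0 X N Q"
    unfolding witness_event_def
  proof (clarify, intro conjI valid ballI)
    fix e assume e: "e \<in> cross_edges n r X W0"
    have "independent_set n r (interp_path (n ^ r) A0 B (t 1)) (S 1)" using t0 K by (simp add: t_def)
    moreover have "\<forall>i<r. (edge_vertex n e i, i) \<in> S 1"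
      using cross_edges_vertex_in[OF e] W0(1) by (auto simp: X_def)
    ultimately show "\<not> interp_path (n ^ r) A0 B (t 1) e"
      using independent_set_not_edge cross_edges_less[OF e] by blast
  next
    fix k e assume k: "k \<in> {2..K}" and e: "e \<in> cross_edges n r (N k) (Q k)"
    have "independent_set n r (interp_path (n ^ r) A0 B (t k)) (S k)" using t0 k by (simp add: t_def)
    moreover have "\<forall>i<r. (edge_vertex n e i, i) \<in> S k"
      using cross_edges_vertex_in[OF e] k by (auto simp: N_def Q_def)
    ultimately show "\<not> interp_path (n ^ r) A0 B (t k) e"
      using independent_set_not_edge cross_edges_less[OF e] by blast
  qed
  moreover have "t \<in> PiE {1..K} (\<lambda>_. {0..T})" using t0 by (auto simp: t_def)
  moreover have "N \<in> PiE {2..K} (\<lambda>_. {N\<in>Pow (vertex_set n r). \<nu>lo \<le> real (card N)})"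
    using valid by (auto simp: N_def witness_valid_def)
  moreover have "Q \<in> PiE {2..K} (\<lambda>_. Pow (W0 \<union> X \<union> (\<Union>j\<in>{2..K}. N j)))"
  proof -
    have "Q k \<subseteq> W0 \<union> X \<union> (\<Union>j\<in>{2..K}. N j)" if k: "k \<in> {2..K}" for k
    proof -
      have "Q k \<subseteq> prefix_union W0 X N k" using valid k by (simp add: witness_valid_def)
      also have "\<dots> \<subseteq> W0 \<union> X \<union> (\<Union>j\<in>{2..K}. N j)" using k by (auto simp: prefix_union_def)
      finally show ?thesis .
    qed
    thus ?thesis by (simp add: Q_def)
  qed
  ultimately show ?thesis using valid by (auto simp: witness_valid_def)
qed

section \<open>The union bound\<close>

lemma prob_nested_UN_le:
  fixes I1 :: "'a set" and I2 :: "'b set" and I3 :: "'c set" and I4 :: "'d set"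
    and I5 :: "'b \<Rightarrow> 'c \<Rightarrow> 'd \<Rightarrow> 'e set"
  assumes "finite I1" "finite I2" "finite I3" "finite I4"
    and "\<And>b c d. b \<in> I2 \<Longrightarrow> c \<in> I3 \<Longrightarrow> d \<in> I4 \<Longrightarrow> finite (I5 b c d)"
  shows "measure_pmf.prob P (\<Union>a\<in>I1. \<Union>b\<in>I2. \<Union>c\<in>I3. \<Union>d\<in>I4. \<Union>e\<in>I5 b c d. F a b c d e)
           \<le> (\<Sum>a\<in>I1. \<Sum>b\<in>I2. \<Sum>c\<in>I3. \<Sum>d\<in>I4. \<Sum>e\<in>I5 b c d. measure_pmf.prob P (F a b c d e))"
proof -
  have UN_le: "measure_pmf.prob P (\<Union>i\<in>I. G i) \<le> (\<Sum>i\<in>I. measure_pmf.prob P (G i))"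
    if "finite I" for I :: "'x set" and G
    using that by (intro measure_UNION_le) auto
  show ?thesis
    by (rule order_trans[OF UN_le[OF assms(1)]] sum_mono order_trans[OF UN_le[OF assms(2)]]
        order_trans[OF UN_le[OF assms(3)]] order_trans[OF UN_le[OF assms(4)]] UN_le assms(5))+
qed

text \<open>The factor \<open>2 ^ K\<close> per vertex pays for the choices of the sets \<open>Q k\<close>.\<close>

lemma two_power_card_Un_le:
  assumes "finite W0" "finite X" "\<forall>k\<in>{2..K}. finite (N k)"
  shows "((2::real) ^ card (W0 \<union> X \<union> (\<Union>j\<in>{2..K}. N j))) ^ (K - 1)
           \<le> (2 ^ K) ^ card W0 * ((2 ^ K) ^ card X * (\<Prod>k\<in>{2..K}. (2 ^ K) ^ card (N k)))"
proof -
  define s where "s = card W0 + card X + (\<Sum>k\<in>{2..K}. card (N k))"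
  have "card (W0 \<union> X \<union> (\<Union>j\<in>{2..K}. N j)) \<le> card (W0 \<union> X) + card (\<Union>j\<in>{2..K}. N j)"
    by (rule card_Un_le)
  also have "\<dots> \<le> s" unfolding s_def by (intro add_mono card_Un_le card_UN_le) simp
  finally have "card (W0 \<union> X \<union> (\<Union>j\<in>{2..K}. N j)) * (K - 1) \<le> s * K" by (intro mult_le_mono) auto
  hence "((2::real) ^ card (W0 \<union> X \<union> (\<Union>j\<in>{2..K}. N j))) ^ (K - 1) \<le> 2 ^ (s * K)"
    unfolding power_mult[symmetric] by (rule power_increasing) simp
  also have "\<dots> = (2 ^ K) ^ card W0 * ((2 ^ K) ^ card X * (\<Prod>k\<in>{2..K}. (2 ^ K) ^ card (N k)))"
    by (simp add: s_def power_add power_mult[symmetric] algebra_simps sum_distrib_left power_sum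
        flip: power_mult)
  finally show ?thesis .
qed

lemma exp_sum_card_eq_prod:
  assumes "finite I"
  shows "exp (- lam * (real (card X) + (\<Sum>k\<in>I. real (card (N k)))))
           = exp (- lam) ^ card X * (\<Prod>k\<in>I. exp (- lam) ^ card (N k))"
proof -
  have pow: "exp (- lam * real c) = exp (- lam) ^ c" for c :: nat
    by (simp add: exp_of_nat_mult[symmetric] mult.commute)
  have "exp (- lam * (real (card X) + (\<Sum>k\<in>I. real (card (N k)))))
      = exp (- lam * real (card X)) * (\<Prod>k\<in>I. exp (- lam * real (card (N k))))"
    by (simp only: distrib_left sum_distrib_left exp_add exp_sum[OF assms])
  thus ?thesis by (simp only: pow)
qed

lemma sum_prob_witness_events_le:
  fixes p lam :: real
  assumes n: "0 < n" and p: "0 \<le> p" "p \<le> 1" and K: "1 \<le> K"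
    and lam: "\<forall>i<r. lam \<le> p * (\<Prod>i'\<in>{..<r}-{i}. \<rho> i')" and \<rho>: "\<forall>i<r. 0 \<le> \<rho> i"
    and t: "\<forall>k\<in>{1..K}. t k \<le> T"
    and fin: "finite W0" "finite X" "\<forall>k\<in>{2..K}. finite (N k)"
  shows "(\<Sum>Q\<in>PiE {2..K} (\<lambda>_. Pow (W0 \<union> X \<union> (\<Union>j\<in>{2..K}. N j))).
            measure_pmf.prob (path_pmf n r p T) (witness_event n r K \<rho> M \<nu> t W0 X N Q))
         \<le> (2 ^ K) ^ card W0 * ((2 ^ K * exp (- lam)) ^ card X
              * (\<Prod>k\<in>{2..K}. (2 ^ K * exp (- lam)) ^ card (N k)))"
proof -
  define U where "U = W0 \<union> X \<union> (\<Union>j\<in>{2..K}. N j)"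
  define G where "G = exp (- lam * (real (card X) + (\<Sum>k\<in>{2..K}. real (card (N k)))))"
  have "(\<Sum>Q\<in>PiE {2..K} (\<lambda>_. Pow U). measure_pmf.prob (path_pmf n r p T) (witness_event n r K \<rho> M \<nu> t W0 X N Q))
      \<le> (\<Sum>Q\<in>PiE {2..K} (\<lambda>_. Pow U). G)"
    unfolding G_def by (intro sum_mono prob_witness_event_le[OF n p t K lam \<rho>])
  also have "\<dots> = real ((2 ^ card U) ^ (K - 1)) * G"
    using fin by (simp add: U_def card_PiE card_Pow)
  also have "\<dots> \<le> (2 ^ K) ^ card W0 * ((2 ^ K) ^ card X * (\<Prod>k\<in>{2..K}. (2 ^ K) ^ card (N k))) * G"
    unfolding U_def by (intro mult_right_mono) (use two_power_card_Un_le[OF fin] in \<open>auto simp: G_def\<close>)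
  also have "\<dots> = (2 ^ K) ^ card W0 * ((2 ^ K * exp (- lam)) ^ card X
              * (\<Prod>k\<in>{2..K}. (2 ^ K * exp (- lam)) ^ card (N k)))"
    unfolding G_def exp_sum_card_eq_prod[OF finite_atLeastAtMost]
    by (simp add: power_mult_distrib prod.distrib algebra_simps)
  finally show ?thesis by (simp add: U_def)
qed

lemma prob_UN_witness_events_le:
  fixes p lam w y z \<nu> :: real and \<rho> :: "nat \<Rightarrow> real"
  assumes n: "0 < n" and p: "0 \<le> p" "p \<le> 1" and K: "1 \<le> K"
    and lam: "\<forall>i<r. lam \<le> p * (\<Prod>i'\<in>{..<r}-{i}. \<rho> i')" and \<rho>: "\<forall>i<r. 0 \<le> \<rho> i"
    and w: "0 < w" "w \<le> 1" and z: "z = 2 ^ K * exp (- lam)" and zy: "z \<le> y"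
  shows "measure_pmf.prob (path_pmf n r p T)
           (\<Union>t\<in>PiE {1..K} (\<lambda>_. {0..T}). \<Union>W0\<in>{W\<in>Pow (vertex_set n r). card W \<le> M}.
             \<Union>X\<in>Pow (vertex_set n r). \<Union>N\<in>PiE {2..K} (\<lambda>_. {N\<in>Pow (vertex_set n r). \<nu> \<le> real (card N)}).
             \<Union>Q\<in>PiE {2..K} (\<lambda>_. Pow (W0 \<union> X \<union> (\<Union>j\<in>{2..K}. N j))). witness_event n r K \<rho> M \<nu> t W0 X N Q)
         \<le> real (T + 1) ^ K * ((2 ^ K) ^ M * ((1 + w) ^ (n * r) / w ^ M))
             * ((1 + z) ^ (n * r) * ((z / y) powr \<nu> * (1 + y) ^ (n * r)) ^ (K - 1))"
proof -
  define V where "V = vertex_set n r"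
  define PT where "PT = PiE {1..K} (\<lambda>_::nat. {0..T})"
  define F0 where "F0 = {W\<in>Pow V. card W \<le> M}"
  define FN where "FN = {N\<in>Pow V. \<nu> \<le> real (card N)}"
  define PN where "PN = PiE {2..K} (\<lambda>_::nat. FN)"
  have finV: "finite V" and cardV: "card V = n * r" by (simp_all add: V_def card_vertex_set)
  have finPN: "finite PN" using finV by (simp add: PN_def FN_def finite_PiE)
  have fin_sub: "finite W" if "W \<subseteq> V" for W using finV that finite_subset by blast
  have zpos: "0 < z" using z by simp
  have "measure_pmf.prob (path_pmf n r p T)
           (\<Union>t\<in>PT. \<Union>W0\<in>F0. \<Union>X\<in>Pow V. \<Union>N\<in>PN.
             \<Union>Q\<in>PiE {2..K} (\<lambda>_. Pow (W0 \<union> X \<union> (\<Union>j\<in>{2..K}. N j))). witness_event n r K \<rho> M \<nu> t W0 X N Q)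
      \<le> (\<Sum>t\<in>PT. \<Sum>W0\<in>F0. \<Sum>X\<in>Pow V. \<Sum>N\<in>PN.
           \<Sum>Q\<in>PiE {2..K} (\<lambda>_. Pow (W0 \<union> X \<union> (\<Union>j\<in>{2..K}. N j))).
             measure_pmf.prob (path_pmf n r p T) (witness_event n r K \<rho> M \<nu> t W0 X N Q))"
    by (rule prob_nested_UN_le)
      (use finV finPN fin_sub in \<open>auto simp: PT_def F0_def PN_def FN_def finite_PiE PiE_iff\<close>)
  also have "\<dots> \<le> (\<Sum>t\<in>PT. \<Sum>W0\<in>F0. \<Sum>X\<in>Pow V. \<Sum>N\<in>PN.
                     (2 ^ K) ^ card W0 * (z ^ card X * (\<Prod>k\<in>{2..K}. z ^ card (N k))))"
  proof (intro sum_mono)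
    fix t W0 X N assume "t \<in> PT" "W0 \<in> F0" "X \<in> Pow V" "N \<in> PN"
    hence "\<forall>k\<in>{1..K}. t k \<le> T" "finite W0" "finite X" "\<forall>k\<in>{2..K}. finite (N k)"
      using fin_sub by (auto simp: PT_def F0_def PN_def FN_def PiE_iff)
    thus "(\<Sum>Q\<in>PiE {2..K} (\<lambda>_. Pow (W0 \<union> X \<union> (\<Union>j\<in>{2..K}. N j))).
            measure_pmf.prob (path_pmf n r p T) (witness_event n r K \<rho> M \<nu> t W0 X N Q))
         \<le> (2 ^ K) ^ card W0 * (z ^ card X * (\<Prod>k\<in>{2..K}. z ^ card (N k)))"
      unfolding z by (rule sum_prob_witness_events_le[OF n p K lam \<rho>])
  qed
  also have "\<dots> = real (card PT) * ((\<Sum>W0\<in>F0. (2 ^ K) ^ card W0)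
                   * ((\<Sum>X\<in>Pow V. z ^ card X) * (\<Sum>N\<in>PN. \<Prod>k\<in>{2..K}. z ^ card (N k))))"
    unfolding sum_product by (simp add: sum_distrib_left)
  also have "\<dots> \<le> real (T + 1) ^ K * ((2 ^ K) ^ M * ((1 + w) ^ (n * r) / w ^ M))
             * ((1 + z) ^ (n * r) * ((z / y) powr \<nu> * (1 + y) ^ (n * r)) ^ (K - 1))"
  proof -
    have W0: "(\<Sum>W0\<in>F0. ((2::real) ^ K) ^ card W0) \<le> (2 ^ K) ^ M * ((1 + w) ^ (n * r) / w ^ M)"
      using sum_power_card_small_subsets_le[OF finV _ w, of "2 ^ K" M] cardV by (simp add: F0_def)
    have X: "(\<Sum>X\<in>Pow V. z ^ card X) = (1 + z) ^ (n * r)"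
      using sum_power_card_Pow[OF finV] cardV by simp
    have N: "(\<Sum>N\<in>PN. \<Prod>k\<in>{2..K}. z ^ card (N k)) \<le> ((z / y) powr \<nu> * (1 + y) ^ (n * r)) ^ (K - 1)"
      using sum_PiE_prod_power_card_le[OF finV _ zpos zy, of "{2..K}" \<nu>] cardV
      by (simp add: PN_def FN_def)
    have "(1 + z) ^ (n * r) * (\<Sum>N\<in>PN. \<Prod>k\<in>{2..K}. z ^ card (N k))
        \<le> (1 + z) ^ (n * r) * ((z / y) powr \<nu> * (1 + y) ^ (n * r)) ^ (K - 1)"
      using N zpos by (intro mult_left_mono) auto
    hence "(\<Sum>W0\<in>F0. (2 ^ K) ^ card W0) * ((1 + z) ^ (n * r) * (\<Sum>N\<in>PN. \<Prod>k\<in>{2..K}. z ^ card (N k)))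
        \<le> (2 ^ K) ^ M * ((1 + w) ^ (n * r) / w ^ M) * ((1 + z) ^ (n * r) * ((z / y) powr \<nu> * (1 + y) ^ (n * r)) ^ (K - 1))"
      using W0 zpos w by (intro mult_mono) (auto intro!: mult_nonneg_nonneg sum_nonneg prod_nonneg)
    hence "real (card PT) * ((\<Sum>W0\<in>F0. (2 ^ K) ^ card W0) * ((1 + z) ^ (n * r) * (\<Sum>N\<in>PN. \<Prod>k\<in>{2..K}. z ^ card (N k))))
        \<le> real (card PT) * ((2 ^ K) ^ M * ((1 + w) ^ (n * r) / w ^ M) * ((1 + z) ^ (n * r) * ((z / y) powr \<nu> * (1 + y) ^ (n * r)) ^ (K - 1)))"
      by (rule mult_left_mono) simp
    moreover have "real (card PT) = real (T + 1) ^ K" by (simp add: PT_def card_PiE)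
    ultimately show ?thesis unfolding X by (simp only: mult.assoc)
  qed
  finally show ?thesis by (simp add: V_def PT_def F0_def PN_def FN_def)
qed

lemma witness_bound_le_exp:
  fixes \<Psi> y z \<nu> :: real
  assumes \<Psi>: "0 < \<Psi>" and y: "0 < y" and z: "0 < z"
  shows "real (T + 1) ^ K * ((2 ^ K) ^ M * ((1 + \<Psi>) ^ (n * r) / \<Psi> ^ M))
           * ((1 + z) ^ (n * r) * ((z / y) powr \<nu> * (1 + y) ^ (n * r)) ^ (K - 1))
         \<le> exp (real K * ln (real T + 1) + real K * real M * ln 2 + real (n * r) * \<Psi> - real M * ln \<Psi>
                + real (n * r) * z + real (K - 1) * (\<nu> * ln (z / y) + real (n * r) * y))"
proof -
  have exp_ln_power: "a ^ k = exp (real k * ln a)" if "0 < a" for a :: real and k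
    using that by (simp add: exp_of_nat_mult)
  have T: "real (T + 1) ^ K = exp (real K * ln (real T + 1))"
    by (subst exp_ln_power) (simp_all add: add.commute)
  have two: "((2::real) ^ K) ^ M = exp (real K * real M * ln 2)"
    by (simp add: exp_ln_power power_mult[symmetric] mult.commute)
  have \<Psi>M: "1 / \<Psi> ^ M = exp (- real M * ln \<Psi>)"
    using \<Psi> by (simp add: exp_ln_power exp_minus divide_inverse)
  have "(1 + \<Psi>) ^ (n * r) / \<Psi> ^ M = (1 + \<Psi>) ^ (n * r) * (1 / \<Psi> ^ M)" by simp
  also have "\<dots> \<le> exp (real (n * r) * \<Psi>) * (1 / \<Psi> ^ M)"
    using \<Psi> one_plus_power_le_exp[of \<Psi> "n * r"] by (intro mult_right_mono) simp_all
  finally have "(1 + \<Psi>) ^ (n * r) / \<Psi> ^ M \<le> exp (real (n * r) * \<Psi>) * exp (- real M * ln \<Psi>)"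
    unfolding \<Psi>M .
  hence A: "((2::real) ^ K) ^ M * ((1 + \<Psi>) ^ (n * r) / \<Psi> ^ M)
      \<le> exp (real K * real M * ln 2) * (exp (real (n * r) * \<Psi>) * exp (- real M * ln \<Psi>))"
    unfolding two by (rule mult_left_mono) simp
  have "(z / y) powr \<nu> * (1 + y) ^ (n * r) \<le> exp (\<nu> * ln (z / y) + real (n * r) * y)"
    using y z one_plus_power_le_exp[of y "n * r"]
    by (simp add: powr_def exp_add mult.commute mult_left_mono)
  hence "((z / y) powr \<nu> * (1 + y) ^ (n * r)) ^ (K - 1) \<le> exp (\<nu> * ln (z / y) + real (n * r) * y) ^ (K - 1)"
    by (rule power_mono) (use y in simp)
  hence B: "(1 + z) ^ (n * r) * ((z / y) powr \<nu> * (1 + y) ^ (n * r)) ^ (K - 1)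
      \<le> exp (real (n * r) * z) * exp (real (K - 1) * (\<nu> * ln (z / y) + real (n * r) * y))"
    using z y one_plus_power_le_exp[of z "n * r"] by (intro mult_mono) (simp_all add: exp_of_nat_mult)
  have "real (T + 1) ^ K * ((2 ^ K) ^ M * ((1 + \<Psi>) ^ (n * r) / \<Psi> ^ M))
           * ((1 + z) ^ (n * r) * ((z / y) powr \<nu> * (1 + y) ^ (n * r)) ^ (K - 1))
      \<le> exp (real K * ln (real T + 1)) * (exp (real K * real M * ln 2) * (exp (real (n * r) * \<Psi>) * exp (- real M * ln \<Psi>)))
          * (exp (real (n * r) * z) * exp (real (K - 1) * (\<nu> * ln (z / y) + real (n * r) * y)))"
    unfolding T using \<Psi> y z by (intro mult_mono[OF mult_left_mono[OF A] B]) auto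
  thus ?thesis by (simp add: exp_add[symmetric] algebra_simps)
qed

lemma witness_bound_le_exp_neg:
  fixes \<Psi> L \<beta> \<beta>' \<epsilon> \<epsilon>' y z \<nu> :: real and K M n r T :: nat
  assumes \<Psi>: "0 < \<Psi>" "\<Psi> \<le> 1" and L: "- ln \<Psi> \<le> L" "0 \<le> L"
    and K: "2 \<le> K" and \<epsilon>: "0 < \<epsilon>"
    and M: "real M \<le> (1 + \<epsilon>) * real r * real n * \<Psi> + real r"
    and y: "y = exp (- \<beta>' * L)" and z: "z = 2 ^ K * exp (- \<beta> * L)" and \<beta>: "\<beta>' \<le> \<beta>"
    and y_small: "real r * (2 ^ K + real K) * y \<le> \<Psi> / 2"
    and K_large: "(1 + \<epsilon>) * real r + 1 \<le> (real K - 1) * (\<epsilon>' / 4) * (\<beta> - \<beta>')"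
    and L_large: "(1 + \<epsilon>) * real r * real K * ln 2 + real r + (real K - 1) * (\<epsilon>' / 4) * real K * ln 2 + 1 \<le> L"
    and n_large: "real K * ln (real T + 1) + real r * (real K * ln 2 + L) \<le> real n * \<Psi> / 4"
    and \<nu>: "\<nu> = \<epsilon>' * real n * \<Psi> / 4"
  shows "real (T + 1) ^ K * ((2 ^ K) ^ M * ((1 + \<Psi>) ^ (n * r) / \<Psi> ^ M))
           * ((1 + z) ^ (n * r) * ((z / y) powr \<nu> * (1 + y) ^ (n * r)) ^ (K - 1))
         \<le> exp (- (\<Psi> / 4) * real n)"
proof -
  define u where "u = real n * \<Psi>"
  define v where "v = u * L"
  define nr where "nr = real (n * r)"
  define a1 where "a1 = (1 + \<epsilon>) * real r * real K * ln 2"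
  define a2 where "a2 = (1 + \<epsilon>) * real r"
  define a3 where "a3 = (real K - 1) * (\<epsilon>' / 4) * real K * ln 2"
  define H where "H = real r * (real K * ln 2 + L)"
  have u0: "0 \<le> u" using \<Psi> by (simp add: u_def)
  have ypos: "0 < y" and zpos: "0 < z" using y z by auto
  have ln_zy: "ln (z / y) = real K * ln 2 - (\<beta> - \<beta>') * L"
    using y z by (simp add: ln_div ln_mult ln_realpow algebra_simps)
  have M_log: "real K * real M * ln 2 - real M * ln \<Psi> \<le> a1 * u + a2 * v + H"
  proof -
    have "real K * real M * ln 2 - real M * ln \<Psi> = real M * (real K * ln 2 - ln \<Psi>)"
      by (simp add: algebra_simps)
    also have "\<dots> \<le> (a2 * u + real r) * (real K * ln 2 + L)"
    proof (rule mult_mono)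
      have "ln \<Psi> \<le> 0" "0 \<le> real K * ln 2" using \<Psi> by simp_all
      thus "0 \<le> real K * ln 2 - ln \<Psi>" by linarith
    qed (use M L u0 \<epsilon> in \<open>auto simp: u_def a2_def mult.assoc\<close>)
    also have "\<dots> = a1 * u + a2 * v + H" by (simp add: a1_def a2_def v_def H_def algebra_simps)
    finally show ?thesis .
  qed
  have yz: "nr * z + real (K - 1) * (nr * y) \<le> u / 2"
  proof -
    have "exp (- \<beta> * L) \<le> exp (- \<beta>' * L)" using \<beta> L by (simp add: mult_right_mono)
    hence "z \<le> 2 ^ K * y" unfolding z y by simp
    hence "nr * z + real (K - 1) * (nr * y) \<le> nr * (2 ^ K * y) + real K * (nr * y)"
      using ypos by (intro add_mono mult_left_mono mult_right_mono) (auto simp: nr_def)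
    also have "\<dots> = real n * (real r * (2 ^ K + real K) * y)" by (simp add: nr_def algebra_simps)
    also have "\<dots> \<le> real n * (\<Psi> / 2)" by (rule mult_left_mono[OF y_small]) simp
    finally show ?thesis by (simp add: u_def)
  qed
  have new: "real (K - 1) * (\<nu> * ln (z / y)) \<le> a3 * u - a2 * v - v"
  proof -
    have "real (K - 1) = real K - 1" using K by simp
    hence "real (K - 1) * (\<nu> * ln (z / y)) = a3 * u - (real K - 1) * (\<epsilon>' / 4) * (\<beta> - \<beta>') * v"
      unfolding \<nu> ln_zy by (simp add: u_def v_def a3_def field_simps)
    moreover have "((1 + \<epsilon>) * real r + 1) * v \<le> (real K - 1) * (\<epsilon>' / 4) * (\<beta> - \<beta>') * v"
      using K_large u0 L by (intro mult_right_mono) (auto simp: v_def)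
    moreover have "a2 * v + v = ((1 + \<epsilon>) * real r + 1) * v" by (simp add: a2_def algebra_simps)
    ultimately show ?thesis by linarith
  qed
  have "a1 * u + real r * u + a3 * u + u \<le> v"
    using mult_right_mono[OF L_large u0] by (simp add: a1_def a3_def v_def algebra_simps)
  moreover have "nr * \<Psi> = real r * u" by (simp add: nr_def u_def)
  moreover have "real K * ln (real T + 1) + H \<le> u / 4" using n_large by (simp add: H_def u_def)
  moreover have "real (K - 1) * (\<nu> * ln (z / y) + nr * y) = real (K - 1) * (\<nu> * ln (z / y)) + real (K - 1) * (nr * y)"
    by (simp add: distrib_left)
  ultimately have "real K * ln (real T + 1) + real K * real M * ln 2 + nr * \<Psi> - real M * ln \<Psi>
           + nr * z + real (K - 1) * (\<nu> * ln (z / y) + nr * y) \<le> - (\<Psi> / 4) * real n"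
    using M_log yz new by (simp add: u_def[symmetric] mult.commute[of \<Psi>])
  hence "exp (real K * ln (real T + 1) + real K * real M * ln 2 + nr * \<Psi> - real M * ln \<Psi>
           + nr * z + real (K - 1) * (\<nu> * ln (z / y) + nr * y)) \<le> exp (- (\<Psi> / 4) * real n)"
    by simp
  thus ?thesis
    using witness_bound_le_exp[OF \<Psi>(1) ypos zpos, of T K M n r \<nu>] unfolding nr_def by linarith
qed

section \<open>Choice of the parameters\<close>

lemma Max_gamma_pos:
  fixes \<gamma> :: "nat \<Rightarrow> real"
  assumes "0 < r" "\<forall>i<r. 0 < \<gamma> i"
  shows "0 < Max (\<gamma> ` {0..<r})" and "\<forall>i<r. \<gamma> i \<le> Max (\<gamma> ` {0..<r})"
proof -
  show "\<forall>i<r. \<gamma> i \<le> Max (\<gamma> ` {0..<r})" by simp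
  thus "0 < Max (\<gamma> ` {0..<r})" using assms by (meson less_le_trans)
qed

lemma Psi_eq_powr:
  assumes "0 < d"
  shows "Psi r \<gamma> d = (Max (\<gamma> ` {0..<r}) / (real r ^ (r - 1) * (real r - 1) * (\<Prod>i<r. \<gamma> i)) * ln d / d)
           powr (1 / (real r - 1))"
  using assms by (simp add: Psi_def field_simps)

lemma powr_inverse_bounds:
  fixes x d m :: real
  assumes "0 < m" "0 < d" "1 / d \<le> x" "x \<le> 1"
  shows "0 < x powr (1 / m)" "x powr (1 / m) \<le> 1" "- ln (x powr (1 / m)) \<le> ln d / m"
proof -
  have x: "0 < x" using assms(2,3) by (meson divide_pos_pos less_le_trans zero_less_one)
  show "0 < x powr (1 / m)" using x by simp
  show "x powr (1 / m) \<le> 1" using powr_mono2[of "1 / m" x 1] x assms by simp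
  have "- ln x \<le> ln d" using ln_mono[OF assms(3)] assms(2) x by (simp add: ln_div)
  hence "(- ln x) / m \<le> ln d / m" using assms(1) by (intro divide_right_mono) auto
  thus "- ln (x powr (1 / m)) \<le> ln d / m" using x by (simp add: ln_powr)
qed

lemma square_div_four_le_exp: "0 \<le> x \<Longrightarrow> x ^ 2 / 4 \<le> exp (x::real)"
proof -
  assume x: "0 \<le> x"
  have "x / 2 \<le> exp (x / 2)" using exp_ge_add_one_self[of "x / 2"] by linarith
  hence "(x / 2) ^ 2 \<le> exp (x / 2) ^ 2" using x by (intro power_mono) auto
  also have "exp (x / 2) ^ 2 = exp x" by (simp add: exp_double[symmetric])
  finally show ?thesis by (simp add: power_divide)
qed

lemma Psi_bounds:
  fixes r :: nat and \<gamma> :: "nat \<Rightarrow> real" and C d :: real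
  defines "C \<equiv> Max (\<gamma> ` {0..<r}) / (real r ^ (r - 1) * (real r - 1) * (\<Prod>i<r. \<gamma> i))"
  assumes r: "2 \<le> r" and d: "1 \<le> d" "1 \<le> C * ln d" "4 * C \<le> ln d"
  shows "0 < Psi r \<gamma> d" "Psi r \<gamma> d \<le> 1" "- ln (Psi r \<gamma> d) \<le> ln d / (real r - 1)"
proof -
  have "C * ln d * 4 \<le> ln d * ln d"
    using mult_right_mono[OF d(3) ln_ge_zero[OF d(1)]] by (simp add: mult_ac)
  hence "C * ln d \<le> ln d ^ 2 / 4" by (simp add: power2_eq_square)
  also have "\<dots> \<le> d" using square_div_four_le_exp[of "ln d"] d by simp
  finally have "C * ln d / d \<le> 1" using d by simp
  moreover have "1 / d \<le> C * ln d / d" using d by (simp add: divide_right_mono)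
  moreover have "0 < d" using d by simp
  moreover have "0 < real r - 1" using r by simp
  ultimately show "0 < Psi r \<gamma> d" "Psi r \<gamma> d \<le> 1" "- ln (Psi r \<gamma> d) \<le> ln d / (real r - 1)"
    using powr_inverse_bounds[of "real r - 1" d "C * ln d / d"]
    by (simp_all add: Psi_eq_powr C_def)
qed

lemma Psi_power_eq:
  fixes \<gamma> :: "nat \<Rightarrow> real"
  assumes r: "2 \<le> r" and \<gamma>: "\<forall>i<r. 0 < \<gamma> i" and d: "1 < d"
  shows "Psi r \<gamma> d ^ (r - 1)
           = Max (\<gamma> ` {0..<r}) * ln d / (d * real r ^ (r - 1) * (real r - 1) * (\<Prod>i<r. \<gamma> i))"
proof -
  have "0 < Max (\<gamma> ` {0..<r})" using Max_gamma_pos[of r \<gamma>] r \<gamma> by simp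
  moreover have "0 < (\<Prod>i<r. \<gamma> i)" using \<gamma> by (intro prod_pos) auto
  ultimately have pos: "0 < Max (\<gamma> ` {0..<r}) * ln d / (d * real r ^ (r - 1) * (real r - 1) * (\<Prod>i<r. \<gamma> i))"
    using r d by simp
  have Psi: "Psi r \<gamma> d = (Max (\<gamma> ` {0..<r}) * ln d / (d * real r ^ (r - 1) * (real r - 1) * (\<Prod>i<r. \<gamma> i)))
      powr (1 / (real r - 1))"
    by (simp add: Psi_def)
  have "real (r - 1) = real r - 1" using r by simp
  hence one: "1 / (real r - 1) * real (r - 1) = 1" using r by simp
  have "Psi r \<gamma> d ^ (r - 1) = Psi r \<gamma> d powr real (r - 1)"
    unfolding Psi by (rule powr_realpow[symmetric]) (simp only: powr_gt_zero less_imp_neq[OF pos, symmetric] not_False_eq_True)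
  thus ?thesis
    using pos unfolding Psi by (simp only: powr_powr one powr_one_gt_zero_iff)
qed

text \<open>The left-hand side is the rate \<open>lam\<close> per vertex of \<open>X\<close> and \<open>N k\<close>.\<close>

lemma edge_rate_le:
  fixes \<gamma> :: "nat \<Rightarrow> real" and \<epsilon> d :: real
  assumes r: "2 \<le> r" and \<gamma>: "\<forall>i<r. 0 < \<gamma> i" and d: "1 < d" and n: "0 < n" and i: "i < r"
    and \<epsilon>: "0 \<le> \<epsilon>"
  shows "(1 + \<epsilon> / 2) ^ (r - 1) * (ln d / (real r - 1))
     \<le> (d / real n ^ (r - 1)) * (\<Prod>i'\<in>{..<r}-{i}. (1 + \<epsilon> / 2) * \<gamma> i' * real r * real n * Psi r \<gamma> d)"
proof -
  define G where "G = Max (\<gamma> ` {0..<r})"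
  define P where "P = (\<Prod>i'\<in>{..<r}-{i}. \<gamma> i')"
  define B where "B = (1 + \<epsilon> / 2) ^ (r - 1)"
  define X where "X = G * ln d / (d * real r ^ (r - 1) * (real r - 1) * (\<Prod>i<r. \<gamma> i))"
  have Ppos: "0 < P" unfolding P_def using \<gamma> by (intro prod_pos) auto
  have prod_split: "(\<Prod>i<r. \<gamma> i) = \<gamma> i * P"
    unfolding P_def using i by (subst prod.remove[of "{..<r}" i]) auto
  have \<gamma>i: "0 < \<gamma> i" "\<gamma> i \<le> G" using \<gamma> i Max_gamma_pos[of r \<gamma>] by (auto simp: G_def)
  define R where "R = real r ^ (r - 1)"
  have r1: "0 < real r - 1" and R: "0 < R" using r by (simp_all add: R_def)
  have "(\<Prod>i'\<in>{..<r}-{i}. (1 + \<epsilon> / 2) * \<gamma> i' * real r * real n * Psi r \<gamma> d)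
      = (\<Prod>i'\<in>{..<r}-{i}. ((1 + \<epsilon> / 2) * real r * real n * Psi r \<gamma> d) * \<gamma> i')"
    by (rule prod.cong) (simp_all add: algebra_simps)
  also have "\<dots> = ((1 + \<epsilon> / 2) * real r * real n * Psi r \<gamma> d) ^ (r - 1) * P"
    using i by (simp add: P_def prod.distrib)
  also have "\<dots> = B * R * real n ^ (r - 1) * X * P"
    using Psi_power_eq[OF r \<gamma> d] by (simp only: power_mult_distrib B_def X_def G_def R_def)
  finally have "(d / real n ^ (r - 1)) * (\<Prod>i'\<in>{..<r}-{i}. (1 + \<epsilon> / 2) * \<gamma> i' * real r * real n * Psi r \<gamma> d)
      = B * (d * R * X) * P"
    using n by simp
  also have "d * R * X = G * ln d / ((real r - 1) * (\<gamma> i * P))"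
  proof -
    have "d * R * (A / (d * R * Z)) = A / Z" for A Z :: real using d R by simp
    thus ?thesis unfolding X_def prod_split R_def[symmetric] by (metis mult.assoc)
  qed
  also have "B * (G * ln d / ((real r - 1) * (\<gamma> i * P))) * P = B * ((G / \<gamma> i) * (ln d / (real r - 1)))"
    using Ppos \<gamma>i r1 by (simp add: field_simps)
  finally have eq: "(d / real n ^ (r - 1)) * (\<Prod>i'\<in>{..<r}-{i}. (1 + \<epsilon> / 2) * \<gamma> i' * real r * real n * Psi r \<gamma> d)
      = B * ((G / \<gamma> i) * (ln d / (real r - 1)))" .
  have "1 * (ln d / (real r - 1)) \<le> (G / \<gamma> i) * (ln d / (real r - 1))"
    using \<gamma>i d r1 by (intro mult_right_mono) auto
  hence "B * (ln d / (real r - 1)) \<le> B * ((G / \<gamma> i) * (ln d / (real r - 1)))"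
    using \<epsilon> by (intro mult_left_mono) (auto simp: B_def)
  thus ?thesis unfolding eq by (simp add: B_def)
qed

lemma exp_tail_le:
  fixes c L \<beta> \<Psi> :: real
  assumes "2 * c \<le> (\<beta> - 1) * L" "exp (- L) \<le> \<Psi>"
  shows "c * exp (- \<beta> * L) \<le> \<Psi> / 2"
proof -
  have "2 * c \<le> exp ((\<beta> - 1) * L)"
    using assms(1) exp_ge_add_one_self[of "(\<beta> - 1) * L"] by linarith
  hence "2 * c * exp (- \<beta> * L) \<le> exp ((\<beta> - 1) * L) * exp (- \<beta> * L)"
    by (rule mult_right_mono) simp
  also have "\<dots> = exp (- L)" by (simp add: exp_add[symmetric] algebra_simps)
  finally show ?thesis using assms(2) by simp
qed

text \<open>All conditions are lower bounds on \<open>ln d\<close>, hence they hold for all large \<open>d\<close>.\<close>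

definition large_degree :: "nat \<Rightarrow> real \<Rightarrow> (nat \<Rightarrow> real) \<Rightarrow> nat \<Rightarrow> real \<Rightarrow> bool" where
  "large_degree r \<epsilon> \<gamma> K d \<longleftrightarrow>
     (let C = Max (\<gamma> ` {0..<r}) / (real r ^ (r - 1) * (real r - 1) * (\<Prod>i<r. \<gamma> i));
          L = ln d / (real r - 1); \<beta> = (1 + \<epsilon> / 2) ^ (r - 1);
          \<epsilon>' = \<epsilon> * Min (\<gamma> ` {0..<r})
      in 1 < d \<and> 1 \<le> ln d \<and> 1 \<le> C * ln d \<and> 4 * C \<le> ln d \<and>
         4 * real r * (2 ^ K + real K) \<le> (\<beta> - 1) * L \<and>
         2 * real K * ln 2 \<le> (\<beta> - 1) * L \<and>
         (1 + \<epsilon>) * real r * real K * ln 2 + real r + (real K - 1) * (\<epsilon>' / 4) * real K * ln 2 + 1 \<le> L)"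

lemma eventually_large_degree:
  fixes \<gamma> :: "nat \<Rightarrow> real"
  assumes r: "2 \<le> r" and \<epsilon>: "0 < \<epsilon>" and \<gamma>: "\<forall>i<r. 0 < \<gamma> i"
  shows "\<forall>\<^sub>F d in at_top. large_degree r \<epsilon> \<gamma> K d"
proof -
  have ev: "\<forall>\<^sub>F d in at_top. Z \<le> c * ln d" if "0 < c" for c Z :: real
  proof -
    have "filterlim (\<lambda>d. c * ln d) at_top at_top"
      by (rule filterlim_tendsto_pos_mult_at_top[OF tendsto_const that ln_at_top])
    thus ?thesis by (simp add: filterlim_at_top)
  qed
  have "0 < Max (\<gamma> ` {0..<r})" "0 < (\<Prod>i<r. \<gamma> i)"
    using Max_gamma_pos[of r \<gamma>] r \<gamma> by (auto intro: prod_pos)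
  hence C: "0 < Max (\<gamma> ` {0..<r}) / (real r ^ (r - 1) * (real r - 1) * (\<Prod>i<r. \<gamma> i))"
    using r by simp
  have r1: "0 < 1 / (real r - 1)" using r by simp
  have \<beta>: "0 < ((1 + \<epsilon> / 2) ^ (r - 1) - 1) / (real r - 1)"
    using r \<epsilon> by (simp add: one_less_power)
  have L: "\<forall>\<^sub>F d in at_top. Z \<le> ln d / (real r - 1)" for Z
    using ev[OF r1, of Z] by (rule eventually_mono) simp
  have \<beta>L: "\<forall>\<^sub>F d in at_top. Z \<le> ((1 + \<epsilon> / 2) ^ (r - 1) - 1) * (ln d / (real r - 1))" for Z
    using ev[OF \<beta>, of Z] by (rule eventually_mono) simp
  have "\<forall>\<^sub>F d in at_top. Z \<le> ln d" for Z :: real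
    using ev[of 1 Z] by simp
  thus ?thesis
    unfolding large_degree_def Let_def by (intro eventually_conj eventually_gt_at_top L \<beta>L ev[OF C])
qed

lemma ln_le_two_sqrt: "0 < x \<Longrightarrow> ln x \<le> 2 * sqrt (x::real)"
proof -
  assume x: "0 < x"
  have "ln (sqrt x) \<le> sqrt x - 1" using x by (intro ln_le_minus_one) simp
  moreover have "ln x = 2 * ln (sqrt x)" using x by (simp add: ln_sqrt)
  ultimately show ?thesis by linarith
qed

lemma eventually_log_path_length_le:
  fixes a \<Psi> H :: real
  assumes a: "0 < a" and \<Psi>: "0 < \<Psi>"
  shows "\<forall>\<^sub>F n in sequentially. \<forall>T. real T \<le> real n powr a \<longrightarrow>
           real K * ln (real T + 1) + H \<le> real n * \<Psi> / 4"
proof -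
  have "\<forall>\<^sub>F n in sequentially. max 1 (max (8 * (real K * ln 2 + H) / \<Psi>) ((16 * a * real K / \<Psi>) ^ 2)) \<le> real n"
    using filterlim_real_sequentially unfolding filterlim_at_top by blast
  thus ?thesis
  proof (rule eventually_mono, intro allI impI)
    fix n T assume n: "max 1 (max (8 * (real K * ln 2 + H) / \<Psi>) ((16 * a * real K / \<Psi>) ^ 2)) \<le> real n"
      and T: "real T \<le> real n powr a"
    have n1: "1 \<le> real n" using n by simp
    have "1 \<le> real n powr a" using n1 a by (intro ge_one_powr_ge_zero) auto
    hence "real T + 1 \<le> 2 * real n powr a" using T by linarith
    hence "ln (real T + 1) \<le> ln (2 * real n powr a)" by (rule ln_mono) simp
    also have "\<dots> = ln 2 + a * ln (real n)" using n1 by (simp add: ln_mult ln_powr)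
    also have "\<dots> \<le> ln 2 + a * (2 * sqrt (real n))"
      using ln_le_two_sqrt[of "real n"] n1 a by (simp add: mult_left_mono)
    finally have "real K * ln (real T + 1) \<le> real K * (ln 2 + a * (2 * sqrt (real n)))"
      by (rule mult_left_mono) simp
    hence lnT: "real K * ln (real T + 1) \<le> real K * ln 2 + 2 * a * real K * sqrt (real n)"
      by (simp add: algebra_simps)
    have "16 * a * real K \<le> sqrt (real n) * \<Psi>"
      using n \<Psi> real_le_rsqrt[of "16 * a * real K / \<Psi>" "real n"] by (simp add: divide_le_eq)
    hence "16 * a * real K * sqrt (real n) \<le> sqrt (real n) * \<Psi> * sqrt (real n)"
      by (rule mult_right_mono) simp
    also have "\<dots> = real n * \<Psi>" by (simp add: mult.commute[of _ \<Psi>] mult.assoc)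
    finally have "2 * a * real K * sqrt (real n) \<le> real n * \<Psi> / 8" by simp
    moreover note lnT
    moreover have "real K * ln 2 + H \<le> real n * \<Psi> / 8"
      using n \<Psi> by (simp add: divide_le_eq mult.commute)
    ultimately show "real K * ln (real T + 1) + H \<le> real n * \<Psi> / 4" by linarith
  qed
qed

lemma bad_sequences_subset_witness_events:
  fixes r n :: nat and \<epsilon> d :: real and \<gamma> :: "nat \<Rightarrow> real"
  defines "\<Psi> \<equiv> Psi r \<gamma> d" and "\<epsilon>' \<equiv> \<epsilon> * Min (\<gamma> ` {0..<r})"
  defines "q \<equiv> \<lambda>i. (1 + \<epsilon>) * \<gamma> i * real r * real n * \<Psi>"
    and "\<rho> \<equiv> \<lambda>i. (1 + \<epsilon> / 2) * \<gamma> i * real r * real n * \<Psi>"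
    and "\<nu> \<equiv> \<epsilon>' / 4 * real n * \<Psi>"
  defines "M \<equiv> \<Sum>i<r. nat \<lceil>q i\<rceil>"
  assumes r: "1 \<le> r" and \<epsilon>: "0 < \<epsilon>" and \<gamma>: "\<forall>i<r. 0 < \<gamma> i" and \<Psi>: "0 \<le> \<Psi>" and K: "1 \<le> K"
  shows "{(A0, B). bad_sequence_exists n r \<epsilon> \<gamma> K d T A0 B}
           \<subseteq> (\<Union>t\<in>PiE {1..K} (\<lambda>_. {0..T}). \<Union>W0\<in>{W\<in>Pow (vertex_set n r). card W \<le> M}.
                \<Union>X\<in>Pow (vertex_set n r). \<Union>N\<in>PiE {2..K} (\<lambda>_. {N\<in>Pow (vertex_set n r). \<nu> \<le> real (card N)}).
                \<Union>Q\<in>PiE {2..K} (\<lambda>_. Pow (W0 \<union> X \<union> (\<Union>j\<in>{2..K}. N j))). witness_event n r K \<rho> M \<nu> t W0 X N Q)"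
proof clarify
  fix A0 B assume "bad_sequence_exists n r \<epsilon> \<gamma> K d T A0 B"
  then obtain S where S1: "\<forall>k\<in>{1..K}. S k \<subseteq> vertex_set n r"
    and S2: "\<forall>k\<in>{1..K}. \<exists>t\<le>T. independent_set n r (interp_path (n ^ r) A0 B t) (S k)"
    and S3: "\<forall>k\<in>{1..K}. \<forall>i<r. q i \<le> real (card (S k \<inter> part n i))"
    and S4: "\<forall>k\<in>{2..K}. \<nu> \<le> real (card (S k - (\<Union>j\<in>{1..<k}. S j))) \<and>
                 real (card (S k - (\<Union>j\<in>{1..<k}. S j))) \<le> \<epsilon>' / 2 * real n * \<Psi>"
    unfolding bad_sequence_exists_def Let_def q_def \<nu>_def \<epsilon>'_def \<Psi>_def by (auto simp: mult.commute)
  have "\<rho> i \<le> q i - \<epsilon>' / 2 * real n * \<Psi>" if i: "i < r" for i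
  proof -
    have "Min (\<gamma> ` {0..<r}) \<le> \<gamma> i" using i by simp
    also have "\<dots> \<le> \<gamma> i * real r" using \<gamma> i r by simp
    finally have "(\<epsilon> / 2 * real n * \<Psi>) * Min (\<gamma> ` {0..<r}) \<le> (\<epsilon> / 2 * real n * \<Psi>) * (\<gamma> i * real r)"
      using \<epsilon> \<Psi> by (intro mult_left_mono) simp_all
    thus ?thesis by (simp add: \<rho>_def q_def \<epsilon>'_def algebra_simps)
  qed
  moreover have "0 < Min (\<gamma> ` {0..<r})" using r \<gamma> by (subst Min_gr_iff) auto
  hence "0 \<le> \<epsilon>' / 2 * real n * \<Psi>" using \<epsilon> \<Psi> by (simp add: \<epsilon>'_def)
  ultimately show "(A0, B) \<in> (\<Union>t\<in>PiE {1..K} (\<lambda>_. {0..T}). \<Union>W0\<in>{W\<in>Pow (vertex_set n r). card W \<le> M}.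
                \<Union>X\<in>Pow (vertex_set n r). \<Union>N\<in>PiE {2..K} (\<lambda>_. {N\<in>Pow (vertex_set n r). \<nu> \<le> real (card N)}).
                \<Union>Q\<in>PiE {2..K} (\<lambda>_. Pow (W0 \<union> X \<union> (\<Union>j\<in>{2..K}. N j))). witness_event n r K \<rho> M \<nu> t W0 X N Q)"
    using bad_sequence_imp_witness_event[OF K S1 S2 S3 S4, of \<rho>] by (auto simp: M_def)
qed

lemma large_degree_Psi_bounds:
  assumes "2 \<le> r" "large_degree r \<epsilon> \<gamma> K d"
  shows "1 < d" "0 < Psi r \<gamma> d" "Psi r \<gamma> d \<le> 1" "- ln (Psi r \<gamma> d) \<le> ln d / (real r - 1)"
  using assms Psi_bounds[OF assms(1), of d \<gamma>] by (simp_all add: large_degree_def Let_def)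

lemma large_degree_tail_bounds:
  fixes r K :: nat and \<epsilon> d :: real and \<gamma> :: "nat \<Rightarrow> real"
  defines "L \<equiv> ln d / (real r - 1)" and "\<beta> \<equiv> (1 + \<epsilon> / 2) ^ (r - 1)"
  assumes r: "2 \<le> r" and d: "large_degree r \<epsilon> \<gamma> K d"
  shows "2 ^ K * exp (- (\<beta> * L)) \<le> exp (- ((1 + \<beta>) / 2) * L)"
    and "real r * (2 ^ K + real K) * exp (- ((1 + \<beta>) / 2) * L) \<le> Psi r \<gamma> d / 2"
proof -
  have d_cond: "4 * real r * (2 ^ K + real K) \<le> (\<beta> - 1) * L" "2 * real K * ln 2 \<le> (\<beta> - 1) * L"
    using d by (simp_all add: large_degree_def Let_def L_def \<beta>_def)
  have "real K * ln 2 - \<beta> * L \<le> - ((1 + \<beta>) / 2) * L" using d_cond(2) by argo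
  moreover have "exp (real K * ln 2 - \<beta> * L) = 2 ^ K * exp (- (\<beta> * L))"
    by (simp add: exp_diff exp_of_nat_mult exp_minus field_simps)
  ultimately show "2 ^ K * exp (- (\<beta> * L)) \<le> exp (- ((1 + \<beta>) / 2) * L)" by (metis exp_le_cancel_iff)
  have "- L \<le> ln (Psi r \<gamma> d)" using large_degree_Psi_bounds(4)[OF r d] by (simp add: L_def)
  hence "exp (- L) \<le> Psi r \<gamma> d" using large_degree_Psi_bounds(2)[OF r d] by (metis exp_le_cancel_iff exp_ln)
  moreover have "2 * (real r * (2 ^ K + real K)) \<le> ((1 + \<beta>) / 2 - 1) * L" using d_cond(1) by argo
  ultimately show "real r * (2 ^ K + real K) * exp (- ((1 + \<beta>) / 2) * L) \<le> Psi r \<gamma> d / 2"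
    by (rule exp_tail_le[rotated])
qed

lemma prob_bad_sequence_le:
  fixes r n K T :: nat and \<epsilon> d :: real and \<gamma> :: "nat \<Rightarrow> real"
  assumes r: "2 \<le> r" and \<epsilon>: "0 < \<epsilon>" and \<gamma>: "\<forall>i<r. 0 < \<gamma> i" and \<gamma>_sum: "(\<Sum>i<r. \<gamma> i) = 1"
    and K: "2 \<le> K"
    and K_large: "(1 + \<epsilon>) * real r + 1
                    \<le> (real K - 1) * (\<epsilon> * Min (\<gamma> ` {0..<r}) / 4) * (((1 + \<epsilon> / 2) ^ (r - 1) - 1) / 2)"
    and d: "large_degree r \<epsilon> \<gamma> K d" and n: "d \<le> real n"
    and n_large: "real K * ln (real T + 1) + real r * (real K * ln 2 + ln d / (real r - 1))
                    \<le> real n * Psi r \<gamma> d / 4"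
  shows "measure_pmf.prob (path_pmf n r (d / real n ^ (r - 1)) T)
           {(A0, B). bad_sequence_exists n r \<epsilon> \<gamma> K d T A0 B} \<le> exp (- (Psi r \<gamma> d / 4) * real n)"
proof -
  define \<Psi> where "\<Psi> = Psi r \<gamma> d"
  define L where "L = ln d / (real r - 1)"
  define \<beta> where "\<beta> = (1 + \<epsilon> / 2) ^ (r - 1)"
  define \<beta>' where "\<beta>' = (1 + \<beta>) / 2"
  define \<epsilon>' where "\<epsilon>' = \<epsilon> * Min (\<gamma> ` {0..<r})"
  define p where "p = d / real n ^ (r - 1)"
  define q where "q = (\<lambda>i. (1 + \<epsilon>) * \<gamma> i * real r * real n * \<Psi>)"
  define \<rho> where "\<rho> = (\<lambda>i. (1 + \<epsilon> / 2) * \<gamma> i * real r * real n * \<Psi>)"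
  define \<nu> where "\<nu> = \<epsilon>' / 4 * real n * \<Psi>"
  define M where "M = (\<Sum>i<r. nat \<lceil>q i\<rceil>)"
  define y where "y = exp (- \<beta>' * L)"
  define z where "z = 2 ^ K * exp (- (\<beta> * L))"
  have d1: "1 < d" and L_large:
      "(1 + \<epsilon>) * real r * real K * ln 2 + real r + (real K - 1) * (\<epsilon>' / 4) * real K * ln 2 + 1 \<le> L"
    using d by (simp_all add: large_degree_def Let_def L_def \<epsilon>'_def)
  have \<Psi>: "0 < \<Psi>" "\<Psi> \<le> 1" "- ln \<Psi> \<le> L"
    using large_degree_Psi_bounds[OF r d] by (simp_all add: \<Psi>_def L_def)
  have n0: "0 < n" using n d1 by simp
  have p: "0 \<le> p" "p \<le> 1"
  proof -
    have "real n \<le> real n ^ (r - 1)" using n0 r by (intro self_le_power) auto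
    hence "d \<le> real n ^ (r - 1)" using n by linarith
    thus "0 \<le> p" "p \<le> 1" using d1 n0 unfolding p_def by (simp_all add: divide_le_eq_1)
  qed
  have rate: "\<forall>i<r. \<beta> * L \<le> p * (\<Prod>i'\<in>{..<r}-{i}. \<rho> i')"
    using edge_rate_le[OF r \<gamma> d1 n0] \<epsilon> by (simp add: \<beta>_def L_def p_def \<rho>_def \<Psi>_def)
  have "measure_pmf.prob (path_pmf n r p T) {(A0, B). bad_sequence_exists n r \<epsilon> \<gamma> K d T A0 B}
      \<le> measure_pmf.prob (path_pmf n r p T)
           (\<Union>t\<in>PiE {1..K} (\<lambda>_. {0..T}). \<Union>W0\<in>{W\<in>Pow (vertex_set n r). card W \<le> M}.
             \<Union>X\<in>Pow (vertex_set n r). \<Union>N\<in>PiE {2..K} (\<lambda>_. {N\<in>Pow (vertex_set n r). \<nu> \<le> real (card N)}).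
             \<Union>Q\<in>PiE {2..K} (\<lambda>_. Pow (W0 \<union> X \<union> (\<Union>j\<in>{2..K}. N j))). witness_event n r K \<rho> M \<nu> t W0 X N Q)"
    unfolding M_def q_def \<rho>_def \<nu>_def \<epsilon>'_def \<Psi>_def
    using r \<epsilon> \<gamma> \<Psi> K
    by (intro measure_pmf.finite_measure_mono bad_sequences_subset_witness_events) (auto simp: \<Psi>_def)
  also have "\<dots> \<le> real (T + 1) ^ K * ((2 ^ K) ^ M * ((1 + \<Psi>) ^ (n * r) / \<Psi> ^ M))
      * ((1 + z) ^ (n * r) * ((z / y) powr \<nu> * (1 + y) ^ (n * r)) ^ (K - 1))"
    using large_degree_tail_bounds(1)[OF r d] K \<gamma> \<epsilon> \<Psi>
    by (intro prob_UN_witness_events_le[OF n0 p _ rate _ \<Psi>(1,2) z_def])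
      (auto simp: \<rho>_def z_def y_def \<beta>'_def \<beta>_def L_def)
  also have "\<dots> \<le> exp (- (\<Psi> / 4) * real n)"
  proof (rule witness_bound_le_exp_neg[OF \<Psi>(1,2,3) _ K \<epsilon> _ y_def _ _ _ _ L_large n_large[folded L_def \<Psi>_def]])
    show "(1 + \<epsilon>) * real r + 1 \<le> (real K - 1) * (\<epsilon>' / 4) * (\<beta> - \<beta>')"
    proof -
      have "\<beta> - \<beta>' = (\<beta> - 1) / 2" by (simp add: \<beta>'_def field_simps)
      thus ?thesis using K_large by (simp only: \<beta>_def \<epsilon>'_def mult.assoc)
    qed
    show "real M \<le> (1 + \<epsilon>) * real r * real n * \<Psi> + real r"
    proof -
      have "real M \<le> (\<Sum>i<r. q i + 1)"
        unfolding M_def using \<gamma> \<epsilon> \<Psi> by (auto simp: q_def intro!: sum_mono)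
      thus ?thesis using \<gamma>_sum by (simp add: q_def sum.distrib flip: sum_distrib_left sum_distrib_right)
    qed
    show "real r * (2 ^ K + real K) * y \<le> \<Psi> / 2"
      using large_degree_tail_bounds(2)[OF r d] by (simp add: y_def \<beta>'_def \<beta>_def L_def \<Psi>_def)
  qed (use d1 r \<epsilon> in \<open>simp_all add: z_def L_def \<beta>'_def \<beta>_def \<nu>_def one_le_power\<close>)
  finally show ?thesis by (simp add: p_def \<Psi>_def)
qed

lemma eventually_prob_bad_sequence_le:
  fixes r K :: nat and \<epsilon> d a :: real and \<gamma> :: "nat \<Rightarrow> real"
  assumes r: "2 \<le> r" and \<epsilon>: "0 < \<epsilon>" and \<gamma>: "\<forall>i<r. 0 < \<gamma> i" and \<gamma>_sum: "(\<Sum>i<r. \<gamma> i) = 1"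
    and K: "2 \<le> K"
    and K_large: "(1 + \<epsilon>) * real r + 1
                    \<le> (real K - 1) * (\<epsilon> * Min (\<gamma> ` {0..<r}) / 4) * (((1 + \<epsilon> / 2) ^ (r - 1) - 1) / 2)"
    and d: "large_degree r \<epsilon> \<gamma> K d" and a: "0 < a"
  shows "\<forall>\<^sub>F n in sequentially. \<forall>T. real T \<le> real n powr a \<longrightarrow>
           measure_pmf.prob (path_pmf n r (d / real n ^ (r - 1)) T)
             {(A0, B). bad_sequence_exists n r \<epsilon> \<gamma> K d T A0 B} \<le> exp (- (Psi r \<gamma> d / 4) * real n)"
proof -
  have "\<forall>\<^sub>F n in sequentially. d \<le> real n"
    using filterlim_real_sequentially unfolding filterlim_at_top by blast
  moreover have "\<forall>\<^sub>F n in sequentially. \<forall>T. real T \<le> real n powr a \<longrightarrow>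
      real K * ln (real T + 1) + real r * (real K * ln 2 + ln d / (real r - 1)) \<le> real n * Psi r \<gamma> d / 4"
    using large_degree_Psi_bounds[OF r d] by (intro eventually_log_path_length_le a) simp
  ultimately show ?thesis
    by eventually_elim (use prob_bad_sequence_le[OF r \<epsilon> \<gamma> \<gamma>_sum K K_large d] in blast)
qed

lemma eventually_ge_linear:
  fixes A B :: real
  assumes "0 < B"
  shows "\<forall>\<^sub>F K in sequentially. 2 \<le> K \<and> A \<le> (real K - 1) * B"
proof -
  have "\<forall>\<^sub>F K in sequentially. max 2 (A / B + 1) \<le> real K"
    using filterlim_real_sequentially unfolding filterlim_at_top by blast
  thus ?thesis
  proof (rule eventually_mono)
    fix K assume K: "max 2 (A / B + 1) \<le> real K"
    hence "A / B \<le> real K - 1" by simp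
    thus "2 \<le> K \<and> A \<le> (real K - 1) * B" using K assms by (simp add: pos_divide_le_eq)
  qed
qed

theorem mainTheorem18:
  fixes r :: nat and \<epsilon> :: real and \<gamma> :: "nat \<Rightarrow> real"
  assumes "r \<ge> 2" and "\<epsilon> > 0"
    and "\<forall>i<r. 0 < \<gamma> i \<and> \<gamma> i < 1"
    and "(\<Sum>i<r. \<gamma> i) = 1"
  shows "\<exists>K0::nat. \<forall>K\<ge>K0. \<exists>d0::real. \<forall>d\<ge>d0. \<forall>a::real. a > 0 \<longrightarrow>
           (\<exists>c>0. \<exists>N::nat. \<forall>n\<ge>N. \<forall>T::nat. real T \<le> real n powr a \<longrightarrow>
              measure_pmf.prob (path_pmf n r (d / real n ^ (r - 1)) T)
                {(A0, B). bad_sequence_exists n r \<epsilon> \<gamma> K d T A0 B}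
              \<le> exp (- c * real n))"
proof -
  have r: "2 \<le> r" and \<epsilon>: "0 < \<epsilon>" and \<gamma>: "\<forall>i<r. 0 < \<gamma> i" using assms by auto
  have "0 < Min (\<gamma> ` {0..<r})" using r \<gamma> by (subst Min_gr_iff) auto
  moreover have "1 < (1 + \<epsilon> / 2) ^ (r - 1)" using r \<epsilon> by (simp add: one_less_power)
  ultimately have "0 < (\<epsilon> * Min (\<gamma> ` {0..<r}) / 4) * (((1 + \<epsilon> / 2) ^ (r - 1) - 1) / 2)"
    using \<epsilon> by simp
  from eventually_ge_linear[OF this, of "(1 + \<epsilon>) * real r + 1"]
  obtain K0 where K0: "\<And>K. K0 \<le> K \<Longrightarrow> 2 \<le> K \<and> (1 + \<epsilon>) * real r + 1
      \<le> (real K - 1) * (\<epsilon> * Min (\<gamma> ` {0..<r}) / 4) * (((1 + \<epsilon> / 2) ^ (r - 1) - 1) / 2)"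
    by (auto simp: eventually_sequentially mult.assoc)
  show ?thesis
  proof (rule exI[of _ K0], intro allI impI)
    fix K assume "K0 \<le> K"
    obtain d0 where d0: "\<And>d. d0 \<le> d \<Longrightarrow> large_degree r \<epsilon> \<gamma> K d"
      using eventually_large_degree[OF r \<epsilon> \<gamma>] by (auto simp: eventually_at_top_linorder)
    have "\<exists>c>0. \<exists>N. \<forall>n\<ge>N. \<forall>T. real T \<le> real n powr a \<longrightarrow>
            measure_pmf.prob (path_pmf n r (d / real n ^ (r - 1)) T)
              {(A0, B). bad_sequence_exists n r \<epsilon> \<gamma> K d T A0 B} \<le> exp (- c * real n)"
      if d: "d0 \<le> d" and a: "0 < a" for d a
    proof -
      have "0 < Psi r \<gamma> d / 4" using large_degree_Psi_bounds[OF r d0[OF d]] by simp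
      moreover obtain N where "\<forall>n\<ge>N. \<forall>T. real T \<le> real n powr a \<longrightarrow>
          measure_pmf.prob (path_pmf n r (d / real n ^ (r - 1)) T)
            {(A0, B). bad_sequence_exists n r \<epsilon> \<gamma> K d T A0 B} \<le> exp (- (Psi r \<gamma> d / 4) * real n)"
        using K0[OF \<open>K0 \<le> K\<close>] eventually_prob_bad_sequence_le[OF r \<epsilon> \<gamma> assms(4) _ _ d0[OF d] a]
        by (auto simp: eventually_sequentially)
      ultimately show ?thesis by blast
    qed
    thus "\<exists>d0. \<forall>d\<ge>d0. \<forall>a>0. \<exists>c>0. \<exists>N. \<forall>n\<ge>N. \<forall>T. real T \<le> real n powr a \<longrightarrow>
            measure_pmf.prob (path_pmf n r (d / real n ^ (r - 1)) T)
              {(A0, B). bad_sequence_exists n r \<epsilon> \<gamma> K d T A0 B} \<le> exp (- c * real n)"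
      by blast
  qed
qed

end
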